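(* Let $n\geq 3$ and let $G\subset S_1\times S_{n-1}$ be a subgroup. Then there exists an acyclic matching on the face poset of the quotient $\Delta(\overline{\Pi}_n)/G$ such that the set of critical simplices consists of the $G$-orbits of the simplices in $C_n$ together with the orbit of $\alpha_n$.
   Context: $\overline{\Pi}_n$ is the poset of set partitions of $[n]$ ordered by refinement (finer is smaller) with minimum and maximum removed. $\Delta(\overline{\Pi}_n)$ is its order complex (simplices are nonempty chains; dimension of a chain with $k+1$ elements is $k$). $S_n$ acts naturally; $S_1\times S_{n-1}=\{\sigma\in S_n\mid\sigma(1)=1\}$. The face poset of $\Delta(\overline{\Pi}_n)/G$ is the set of $G$-orbits $[\sigma]$ of simplices, with $[\sigma]\le[\tau]$ iff $\sigma\subseteq g\tau$ for some $g\in G$. $A$ is the set of partitions in $\overline{\Pi}_n$ all of whose blocks not containing $1$ are singletons; $C_n$ is the set of $(n-3)$-dimensional simplices all of whose vertices lie in $A$; $\alpha_n$ is the vertex $\{\{1\},\{2,\dots,n\}\}$. A partial matching on a poset is a set of pairs $(a,b)$ with $b$ covering $a$, each element in at most one pair; it is acyclic if there is no cycle $b_1>a_1<b_2>\dots<b_t>a_t<b_1$, $t\ge2$, with distinct $b_i$ and matched $(a_i,b_i)$; critical elements are the unmatched ones. *)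

theory Defs
  imports "HOL-Library.Disjoint_Sets" "HOL-Combinatorics.Permutations"
begin

type_synonym partition = "nat set set"
type_synonym simplex = "nat set set set"

definition refines :: "partition \<Rightarrow> partition \<Rightarrow> bool" where
  "refines P Q \<longleftrightarrow> (\<forall>B\<in>P. \<exists>C\<in>Q. B \<subseteq> C)"

definition proper_partition :: "nat \<Rightarrow> partition \<Rightarrow> bool" where
  "proper_partition n P \<longleftrightarrow> partition_on {1..n} P
     \<and> P \<noteq> (\<lambda>i. {i}) ` {1..n} \<and> P \<noteq> {{1..n}}"

definition simplex :: "nat \<Rightarrow> simplex \<Rightarrow> bool" where
  "simplex n \<sigma> \<longleftrightarrow> \<sigma> \<noteq> {} \<and> finite \<sigma> \<and> (\<forall>P\<in>\<sigma>. proper_partition n P)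
     \<and> (\<forall>P\<in>\<sigma>. \<forall>Q\<in>\<sigma>. refines P Q \<or> refines Q P)"

definition simplex_dim :: "simplex \<Rightarrow> nat" where
  "simplex_dim \<sigma> = card \<sigma> - 1"

definition act_part :: "(nat \<Rightarrow> nat) \<Rightarrow> partition \<Rightarrow> partition" where
  "act_part g P = (\<lambda>B. g ` B) ` P"

definition act_simp :: "(nat \<Rightarrow> nat) \<Rightarrow> simplex \<Rightarrow> simplex" where
  "act_simp g \<sigma> = act_part g ` \<sigma>"

text \<open>G is a subgroup of S_1 x S_{n-1} = permutations of [n] fixing 1.\<close>
definition subgroup_S1_Snm1 :: "nat \<Rightarrow> (nat \<Rightarrow> nat) set \<Rightarrow> bool" where
  "subgroup_S1_Snm1 n G \<longleftrightarrow> id \<in> G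
     \<and> (\<forall>g\<in>G. g permutes {1..n} \<and> g 1 = 1)
     \<and> (\<forall>g\<in>G. \<forall>h\<in>G. g \<circ> h \<in> G)
     \<and> (\<forall>g\<in>G. inv g \<in> G)"

definition orbit :: "(nat \<Rightarrow> nat) set \<Rightarrow> simplex \<Rightarrow> simplex set" where
  "orbit G \<sigma> = (\<lambda>g. act_simp g \<sigma>) ` G"

definition quot_faces :: "nat \<Rightarrow> (nat \<Rightarrow> nat) set \<Rightarrow> simplex set set" where
  "quot_faces n G = {orbit G \<sigma> | \<sigma>. simplex n \<sigma>}"

definition quot_le :: "(nat \<Rightarrow> nat) set \<Rightarrow> simplex set \<Rightarrow> simplex set \<Rightarrow> bool" where
  "quot_le G X Y \<longleftrightarrow> (\<exists>\<sigma>\<in>X. \<exists>\<tau>\<in>Y. \<exists>g\<in>G. \<sigma> \<subseteq> act_simp g \<tau>)"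

definition quot_less :: "(nat \<Rightarrow> nat) set \<Rightarrow> simplex set \<Rightarrow> simplex set \<Rightarrow> bool" where
  "quot_less G X Y \<longleftrightarrow> quot_le G X Y \<and> X \<noteq> Y"

definition covers :: "'a set \<Rightarrow> ('a \<Rightarrow> 'a \<Rightarrow> bool) \<Rightarrow> 'a \<Rightarrow> 'a \<Rightarrow> bool" where
  "covers S lt b a \<longleftrightarrow> a \<in> S \<and> b \<in> S \<and> lt a b \<and> \<not> (\<exists>c\<in>S. lt a c \<and> lt c b)"

definition partial_matching :: "'a set \<Rightarrow> ('a \<Rightarrow> 'a \<Rightarrow> bool) \<Rightarrow> ('a \<times> 'a) set \<Rightarrow> bool" where
  "partial_matching S lt M \<longleftrightarrow>
     (\<forall>(a, b)\<in>M. covers S lt b a)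
     \<and> (\<forall>p\<in>M. \<forall>q\<in>M. p \<noteq> q \<longrightarrow>
          {fst p, snd p} \<inter> {fst q, snd q} = {})"

definition acyclic_matching :: "'a set \<Rightarrow> ('a \<Rightarrow> 'a \<Rightarrow> bool) \<Rightarrow> ('a \<times> 'a) set \<Rightarrow> bool" where
  "acyclic_matching S lt M \<longleftrightarrow> partial_matching S lt M \<and>
     \<not> (\<exists>t a b. t \<ge> 2 \<and> inj_on b {..<t}
          \<and> (\<forall>i<t. (a i, b i) \<in> M \<and> lt (a i) (b (Suc i mod t))))"

definition critical :: "'a set \<Rightarrow> ('a \<times> 'a) set \<Rightarrow> 'a set" where
  "critical S M = {x \<in> S. \<forall>(a, b)\<in>M. x \<noteq> a \<and> x \<noteq> b}"

definition setA :: "nat \<Rightarrow> partition set" where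
  "setA n = {P. proper_partition n P \<and> (\<forall>B\<in>P. 1 \<notin> B \<longrightarrow> card B = 1)}"

definition C_simp :: "nat \<Rightarrow> simplex set" where
  "C_simp n = {\<sigma>. simplex n \<sigma> \<and> simplex_dim \<sigma> = n - 3 \<and> \<sigma> \<subseteq> setA n}"

definition alpha :: "nat \<Rightarrow> partition" where
  "alpha n = {{1}, {2..n}}"

end

(*
  For a chain s of proper partitions, its core is the largest set C containing 1 such that s
  contains the partitions of A whose block of 1 grows, one element at a time, from a pair up to C.
  The pivot of s is the least vertex of s whose block of 1 exceeds C, with that block split into C
  and the rest (or {C, complement} if there is no such vertex). The pivot is comparable with every
  vertex of s, and adding or removing it changes neither the core nor the pivot, so s \<mapsto> s \<union> {pivot}
  (for pivot \<notin> s) is a matching; since the elements of G fix 1, the construction commutes with G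
  and descends to orbits. An unmatched chain contains its pivot and is either {\<alpha>_n}, or its pivot is
  the A-partition of its core, which forces the core to miss one point and the chain to lie in C_n.
  Along an alternating path the upper chains strictly increase in the lexicographic potential
  (number of vertices, size of the core, size of the least vertex beyond the core), so the matching
  has no cycles.
*)

theory Submission
  imports Defs "HOL-Library.Product_Lexorder"
begin

declare One_nat_def [simp del]

lemma partition_on_block_unique:
  assumes "partition_on X P" "B \<in> P" "B' \<in> P" "x \<in> B" "x \<in> B'"
  shows "B = B'"
  using assms unfolding partition_on_def disjoint_def by blast

lemma partition_on_block_ex:
  assumes "partition_on X P" "x \<in> X"
  obtains B where "B \<in> P" "x \<in> B"
  using assms unfolding partition_on_def by blast

lemma partition_on_block_subset:
  assumes "partition_on X P" "B \<in> P" shows "B \<subseteq> X"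
  using assms unfolding partition_on_def by blast

lemma partition_on_block_nonempty:
  assumes "partition_on X P" "B \<in> P" shows "B \<noteq> {}"
  using assms unfolding partition_on_def by blast

lemma refines_refl: "refines P P"
  unfolding refines_def by blast

lemma refines_trans: "refines P Q \<Longrightarrow> refines Q R \<Longrightarrow> refines P R"
  unfolding refines_def by (meson order_trans)

lemma refines_antisym:
  assumes "partition_on X P" "partition_on X Q" "refines P Q" "refines Q P"
  shows "P = Q"
  using assms Disjoint_Sets.refines_asym[of X P Q]
  unfolding Disjoint_Sets.refines_def refines_def by blast

lemma refines_block_map:
  assumes P: "partition_on X P" and Q: "partition_on X Q" and PQ: "refines P Q"
  obtains f where "\<forall>B\<in>P. f B \<in> Q \<and> B \<subseteq> f B" and "f ` P = Q"
proof -
  define f where "f B = (SOME C. C \<in> Q \<and> B \<subseteq> C)" for B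
  have f: "f B \<in> Q \<and> B \<subseteq> f B" if "B \<in> P" for B
    unfolding f_def using PQ that unfolding refines_def by (metis (mono_tags, lifting) someI_ex)
  have "Q \<subseteq> f ` P"
  proof
    fix C assume C: "C \<in> Q"
    obtain x where x: "x \<in> C" using partition_on_block_nonempty[OF Q C] by blast
    have "x \<in> X" using partition_on_block_subset[OF Q C] x by blast
    then obtain B where B: "B \<in> P" "x \<in> B" by (rule partition_on_block_ex[OF P])
    have "f B = C" using partition_on_block_unique[OF Q _ C] f[OF B(1)] B(2) x by blast
    then show "C \<in> f ` P" using B by blast
  qed
  then have "f ` P = Q" using f by blast
  with f show thesis by (intro that) auto
qed

lemma refines_card_le:
  assumes "finite X" "partition_on X P" "partition_on X Q" "refines P Q"
  shows "card Q \<le> card P"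
proof -
  obtain f where "\<forall>B\<in>P. f B \<in> Q \<and> B \<subseteq> f B" "f ` P = Q"
    by (rule refines_block_map[OF assms(2-4)])
  then show ?thesis using card_image_le[OF finite_elements[OF assms(1,2)]] by blast
qed

lemma refines_card_less:
  assumes X: "finite X" and P: "partition_on X P" and Q: "partition_on X Q"
    and PQ: "refines P Q" and "P \<noteq> Q"
  shows "card Q < card P"
proof (rule ccontr)
  assume "\<not> card Q < card P"
  then have eq: "card Q = card P" using refines_card_le[OF assms(1-4)] by simp
  obtain f where f: "\<forall>B\<in>P. f B \<in> Q \<and> B \<subseteq> f B" and fP: "f ` P = Q"
    by (rule refines_block_map[OF P Q PQ])
  have inj: "inj_on f P"
    using eq_card_imp_inj_on[OF finite_elements[OF X P], of f] eq fP by simp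
  have "refines Q P"
    unfolding refines_def
  proof
    fix C assume C: "C \<in> Q"
    then obtain B where B: "B \<in> P" "f B = C" using fP by blast
    have "C \<subseteq> B"
    proof
      fix x assume x: "x \<in> C"
      have "x \<in> X" using partition_on_block_subset[OF Q C] x by blast
      then obtain B' where B': "B' \<in> P" "x \<in> B'" by (rule partition_on_block_ex[OF P])
      have "f B' = C" using partition_on_block_unique[OF Q _ C] f B'(1) B'(2) x by blast
      then show "x \<in> B" using inj B B' unfolding inj_on_def by metis
    qed
    then show "\<exists>B\<in>P. C \<subseteq> B" using B by blast
  qed
  then show False using refines_antisym[OF P Q PQ] assms(5) by blast
qed

definition block1 :: "partition \<Rightarrow> nat set" where
  "block1 P = (THE B. B \<in> P \<and> 1 \<in> B)"

lemma block1_eq: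
  assumes "partition_on X P" "B \<in> P" "1 \<in> B"
  shows "block1 P = B"
  unfolding block1_def
proof (rule the_equality)
  fix B' assume "B' \<in> P \<and> 1 \<in> B'"
  then show "B' = B" using partition_on_block_unique[OF assms(1) _ assms(2) _ assms(3)] by blast
qed (use assms in simp)

lemma block1_in:
  assumes "partition_on X P" "1 \<in> X"
  shows "block1 P \<in> P" "1 \<in> block1 P"
proof -
  obtain B where B: "B \<in> P" "1 \<in> B" using partition_on_block_ex[OF assms] .
  then show "block1 P \<in> P" "1 \<in> block1 P" using block1_eq[OF assms(1) B] by simp_all
qed

lemma refines_block1:
  assumes "partition_on X P" "partition_on X Q" "1 \<in> X" "refines P Q"
  shows "block1 P \<subseteq> block1 Q"
proof -
  obtain C where C: "C \<in> Q" "block1 P \<subseteq> C"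
    using assms(4) block1_in[OF assms(1,3)] unfolding refines_def by blast
  then show ?thesis using block1_eq[OF assms(2) C(1)] block1_in[OF assms(1,3)] by blast
qed

definition A_partition :: "nat \<Rightarrow> nat set \<Rightarrow> partition" where
  "A_partition n D = insert D ((\<lambda>x. {x}) ` ({1..n} - D))"

definition two_block :: "nat \<Rightarrow> nat set \<Rightarrow> partition" where
  "two_block n C = {C, {1..n} - C}"

definition split_block1 :: "partition \<Rightarrow> nat set \<Rightarrow> partition" where
  "split_block1 P C = insert C (insert (block1 P - C) (P - {block1 P}))"

lemma card_singletons: "card ((\<lambda>i. {i}) ` {1..n}) = n"
  by (subst card_image) (auto simp: inj_on_def)

locale partition_lattice =
  fixes n :: nat
  assumes n_ge_3: "3 \<le> n"
begin

lemma one_in_ground: "1 \<in> {1..n}"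
  using n_ge_3 by simp

lemma block1_in_ground:
  assumes "partition_on {1..n} P"
  shows "block1 P \<in> P" "1 \<in> block1 P"
  using block1_in[OF assms one_in_ground] by simp_all

lemma block1_subset_ground:
  assumes "partition_on {1..n} P"
  shows "block1 P \<subseteq> {1..n}"
  using partition_on_block_subset[OF assms block1_in_ground(1)[OF assms]] .

lemma block_disjoint_block1:
  assumes "partition_on {1..n} P" "B \<in> P" "B \<noteq> block1 P"
  shows "B \<inter> block1 P = {}"
  using assms block1_in_ground(1)[OF assms(1)] unfolding partition_on_def disjoint_def by blast

lemma A_partition_memE:
  assumes "B \<in> A_partition n D" "B \<noteq> D"
  obtains x where "x \<in> {1..n}" "x \<notin> D" "B = {x}"
  using assms unfolding A_partition_def by blast

lemma partition_on_A_partition: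
  assumes "1 \<in> D" "D \<subseteq> {1..n}"
  shows "partition_on {1..n} (A_partition n D)"
  unfolding partition_on_def A_partition_def disjoint_def using assms by auto

lemma block1_A_partition:
  assumes "1 \<in> D" "D \<subseteq> {1..n}"
  shows "block1 (A_partition n D) = D"
  by (rule block1_eq[OF partition_on_A_partition[OF assms]])
    (use assms in \<open>simp_all add: A_partition_def\<close>)

lemma A_partition_refines_iff:
  assumes Q: "partition_on {1..n} Q" and D: "1 \<in> D" "D \<subseteq> {1..n}"
  shows "refines (A_partition n D) Q \<longleftrightarrow> D \<subseteq> block1 Q"
proof
  assume "refines (A_partition n D) Q"
  then show "D \<subseteq> block1 Q"
    using refines_block1[OF partition_on_A_partition[OF D] Q one_in_ground]
    by (simp add: block1_A_partition[OF D])
next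
  assume DQ: "D \<subseteq> block1 Q"
  show "refines (A_partition n D) Q"
    unfolding refines_def
  proof
    fix B assume B: "B \<in> A_partition n D"
    show "\<exists>C\<in>Q. B \<subseteq> C"
    proof (cases "B = D")
      case True then show ?thesis using DQ block1_in_ground[OF Q] by blast
    next
      case False
      then obtain x where x: "x \<in> {1..n}" "B = {x}" by (rule A_partition_memE[OF B])
      then show ?thesis using partition_on_block_ex[OF Q x(1)] by blast
    qed
  qed
qed

lemma A_partition_singleton: "A_partition n {1} = (\<lambda>i. {i}) ` {1..n}"
  unfolding A_partition_def using one_in_ground by auto

lemma A_partition_ground: "A_partition n {1..n} = {{1..n}}"
  unfolding A_partition_def by auto

lemma proper_A_partition_iff:
  assumes D: "1 \<in> D" "D \<subseteq> {1..n}"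
  shows "proper_partition n (A_partition n D) \<longleftrightarrow> D \<noteq> {1} \<and> D \<noteq> {1..n}"
proof -
  have "D \<in> A_partition n D" unfolding A_partition_def by simp
  then have "A_partition n D \<noteq> (\<lambda>i. {i}) ` {1..n}" if "D \<noteq> {1}"
    using that D(1) by auto
  moreover have "A_partition n D \<noteq> {{1..n}}" if "D \<noteq> {1..n}"
    using that \<open>D \<in> A_partition n D\<close> by auto
  ultimately show ?thesis
    unfolding proper_partition_def
    using partition_on_A_partition[OF D] A_partition_singleton A_partition_ground by auto
qed

lemma A_partition_block1:
  assumes P: "partition_on {1..n} P" and singletons: "\<forall>B\<in>P. 1 \<notin> B \<longrightarrow> card B = 1"
  shows "P = A_partition n (block1 P)"
proof -
  note b1 = block1_in_ground[OF P]
  have other: "1 \<notin> B" if "B \<in> P" "B \<noteq> block1 P" for B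
    using partition_on_block_unique[OF P that(1) b1(1) _ b1(2)] that(2) by blast
  show ?thesis
  proof
    show "P \<subseteq> A_partition n (block1 P)"
    proof
      fix B assume B: "B \<in> P"
      show "B \<in> A_partition n (block1 P)"
      proof (cases "B = block1 P")
        case False
        then obtain x where x: "B = {x}"
          using singletons B other[OF B] by (metis card_1_singletonE)
        have "x \<in> {1..n}" using partition_on_block_subset[OF P B] x by blast
        moreover have "x \<notin> block1 P"
          using partition_on_block_unique[OF P B b1(1), of x] x False by blast
        ultimately show ?thesis unfolding A_partition_def using x by blast
      qed (simp add: A_partition_def)
    qed
    show "A_partition n (block1 P) \<subseteq> P"
    proof
      fix B assume B: "B \<in> A_partition n (block1 P)"
      show "B \<in> P"
      proof (cases "B = block1 P")
        case False
        then obtain x where x: "x \<in> {1..n}" "x \<notin> block1 P" "B = {x}"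
          by (rule A_partition_memE[OF B])
        obtain C where C: "C \<in> P" "x \<in> C" using partition_on_block_ex[OF P x(1)] .
        have "C \<noteq> block1 P" using C x by blast
        then have "card C = 1" using singletons C other by blast
        then have "C = {x}" using C(2) by (metis card_1_singletonE singletonD)
        then show ?thesis using C x by simp
      qed (simp add: b1)
    qed
  qed
qed

lemma A_partition_block_card:
  assumes "B \<in> A_partition n D" "1 \<notin> B" "1 \<in> D"
  shows "card B = 1"
  using assms unfolding A_partition_def by auto

lemma A_partition_cover:
  assumes Q: "partition_on {1..n} Q" and D: "1 \<in> D" "D \<subseteq> {1..n}"
    and y: "y \<notin> D" "y \<in> {1..n}"
    and lower: "refines (A_partition n D) Q" and upper: "refines Q (A_partition n (insert y D))"
  shows "Q = A_partition n D \<or> Q = A_partition n (insert y D)"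
proof -
  have D': "1 \<in> insert y D" "insert y D \<subseteq> {1..n}" using D y by auto
  have lo: "D \<subseteq> block1 Q" using lower A_partition_refines_iff[OF Q D] by simp
  have up: "block1 Q \<subseteq> insert y D"
    using refines_block1[OF Q partition_on_A_partition[OF D'] one_in_ground upper]
      block1_A_partition[OF D'] by simp
  show ?thesis
  proof (cases "y \<in> block1 Q")
    case True
    then have "refines (A_partition n (insert y D)) Q"
      using A_partition_refines_iff[OF Q D'] lo by auto
    then show ?thesis using refines_antisym[OF Q partition_on_A_partition[OF D'] upper] by simp
  next
    case False
    then have bQ: "block1 Q = D" using lo up by blast
    have "card B = 1" if B: "B \<in> Q" "1 \<notin> B" for B
    proof -
      have disj: "B \<inter> D = {}" using block_disjoint_block1[OF Q B(1)] block1_in_ground(2)[OF Q] B(2) bQ by blast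
      obtain C where C: "C \<in> A_partition n (insert y D)" "B \<subseteq> C" using upper B(1) unfolding refines_def by blast
      have "\<exists>z. B \<subseteq> {z}"
      proof (cases "C = insert y D")
        case True
        then show ?thesis using C(2) disj by blast
      next
        case False
        then show ?thesis using C by (metis A_partition_memE)
      qed
      then obtain z where "B \<subseteq> {z}" ..
      then have "B = {z}" using partition_on_block_nonempty[OF Q B(1)] by blast
      then show ?thesis by simp
    qed
    then show ?thesis using A_partition_block1[OF Q] bQ by simp
  qed
qed

lemma A_partition_block1_coatom:
  assumes Q: "partition_on {1..n} Q" and z: "{1..n} - block1 Q = {z}"
  shows "Q = A_partition n (block1 Q)"
proof -
  have "card B = 1" if B: "B \<in> Q" "1 \<notin> B" for B
  proof -
    have "B \<noteq> block1 Q" using B(2) block1_in_ground(2)[OF Q] by blast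
    then have "B \<subseteq> {z}"
      using block_disjoint_block1[OF Q B(1)] partition_on_block_subset[OF Q B(1)] z by blast
    then have "B = {z}" using partition_on_block_nonempty[OF Q B(1)] by blast
    then show ?thesis by simp
  qed
  then show ?thesis using A_partition_block1[OF Q] by simp
qed

lemma partition_on_two_block:
  assumes "1 \<in> C" "C \<subseteq> {1..n}" "C \<noteq> {1..n}"
  shows "partition_on {1..n} (two_block n C)"
  unfolding partition_on_def two_block_def disjoint_def using assms by auto

lemma block1_two_block:
  assumes "1 \<in> C"
  shows "block1 (two_block n C) = C"
  unfolding block1_def two_block_def using assms by (intro the_equality) auto

lemma proper_two_block:
  assumes "1 \<in> C" "C \<subseteq> {1..n}" "C \<noteq> {1..n}"
  shows "proper_partition n (two_block n C)"
proof -
  have "card (two_block n C) \<le> 2" unfolding two_block_def by (simp add: card_insert_le_m1)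
  then have "two_block n C \<noteq> (\<lambda>i. {i}) ` {1..n}" using card_singletons[of n] n_ge_3 by auto
  moreover have "two_block n C \<noteq> {{1..n}}" using assms unfolding two_block_def by auto
  ultimately show ?thesis unfolding proper_partition_def using partition_on_two_block[OF assms] by simp
qed

lemma refines_two_block:
  assumes Q: "partition_on {1..n} Q" and bQ: "block1 Q = C"
  shows "refines Q (two_block n C)"
  unfolding refines_def
proof
  fix B assume B: "B \<in> Q"
  show "\<exists>C'\<in>two_block n C. B \<subseteq> C'"
  proof (cases "B = C")
    case False
    have "B \<inter> C = {}" using block_disjoint_block1[OF Q B] False bQ by blast
    then have "B \<subseteq> {1..n} - C" using partition_on_block_subset[OF Q B] by blast
    then show ?thesis unfolding two_block_def by blast
  qed (simp add: two_block_def)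
qed

lemma two_block_eq_A_partition_iff:
  assumes "1 \<in> C"
  shows "two_block n C = A_partition n C \<longleftrightarrow> (\<exists>z. {1..n} - C = {z})"
proof
  assume e: "two_block n C = A_partition n C"
  have "{1..n} - C \<in> A_partition n C" "{1..n} - C \<noteq> C"
    using e assms unfolding two_block_def by auto
  then show "\<exists>z. {1..n} - C = {z}" by (metis A_partition_memE)
next
  assume "\<exists>z. {1..n} - C = {z}"
  then obtain z where z: "{1..n} - C = {z}" by blast
  show "two_block n C = A_partition n C" unfolding two_block_def A_partition_def z by simp
qed

lemma two_block_singleton: "two_block n {1} = alpha n"
proof -
  have "{1..n} - {1} = {2..n}" by auto
  then show ?thesis unfolding two_block_def alpha_def by simp
qed

lemma simplex_alpha: "simplex n {alpha n}"
proof -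
  have "n \<in> {1..n}" "n \<notin> {1}" using n_ge_3 by auto
  then have "{1} \<noteq> {1..n}" by blast
  then have "proper_partition n (alpha n)"
    using proper_two_block[of "{1}"] two_block_singleton one_in_ground by simp
  then show ?thesis unfolding simplex_def using refines_refl by simp
qed

lemma partition_on_split_block1:
  assumes P: "partition_on {1..n} P" and C: "1 \<in> C" "C \<subset> block1 P"
  shows "partition_on {1..n} (split_block1 P C)"
proof -
  note b1 = block1_in_ground[OF P]
  have "\<Union>(split_block1 P C) = \<Union>P"
    using b1(1) C(2) unfolding split_block1_def by blast
  moreover have "{} \<notin> split_block1 P C"
    using partition_onD3[OF P] C unfolding split_block1_def by blast
  moreover have "disjoint (split_block1 P C)"
    using partition_onD2[OF P] b1(1) C(2) unfolding split_block1_def disjoint_def by blast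
  ultimately show ?thesis using partition_onD1[OF P] unfolding partition_on_def by simp
qed

lemma block1_split_block1:
  assumes P: "partition_on {1..n} P" and C: "1 \<in> C" "C \<subset> block1 P"
  shows "block1 (split_block1 P C) = C"
  by (rule block1_eq[OF partition_on_split_block1[OF assms]])
    (use C in \<open>simp_all add: split_block1_def\<close>)

lemma split_block1_refines:
  assumes P: "partition_on {1..n} P" and C: "C \<subseteq> block1 P"
  shows "refines (split_block1 P C) P"
  using block1_in_ground(1)[OF P] C unfolding refines_def split_block1_def by blast

lemma refines_split_block1:
  assumes P: "partition_on {1..n} P" and Q: "partition_on {1..n} Q"
    and bQ: "block1 Q = C" and QP: "refines Q P"
  shows "refines Q (split_block1 P C)"
  unfolding refines_def
proof
  fix X assume X: "X \<in> Q"
  show "\<exists>Y\<in>split_block1 P C. X \<subseteq> Y"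
  proof (cases "X = C")
    case False
    have disj: "X \<inter> C = {}" using block_disjoint_block1[OF Q X] False bQ by blast
    obtain Y where Y: "Y \<in> P" "X \<subseteq> Y" using QP X unfolding refines_def by blast
    show ?thesis
    proof (cases "Y = block1 P")
      case True
      then have "X \<subseteq> block1 P - C" using Y disj by blast
      then show ?thesis unfolding split_block1_def by blast
    next
      case False
      then show ?thesis using Y unfolding split_block1_def by blast
    qed
  qed (simp add: split_block1_def)
qed

lemma split_block1_eq_A_partition:
  assumes P: "partition_on {1..n} P" and C: "1 \<in> C" "C \<subset> block1 P"
    and e: "split_block1 P C = A_partition n C"
  obtains y where "y \<notin> C" "P = A_partition n (insert y C)"
proof -
  note b1 = block1_in_ground[OF P]
  have "block1 P - C \<in> split_block1 P C" unfolding split_block1_def by simp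
  then have "block1 P - C \<in> A_partition n C" by (simp only: e)
  moreover have "block1 P - C \<noteq> C" using C by blast
  ultimately obtain y where y: "y \<notin> C" "block1 P - C = {y}" by (metis A_partition_memE)
  have B: "block1 P = insert y C" using y(2) C(2) by auto
  have "\<forall>X\<in>P. 1 \<notin> X \<longrightarrow> card X = 1"
  proof (intro ballI impI)
    fix X assume X: "X \<in> P" "1 \<notin> X"
    then have "X \<in> split_block1 P C" "X \<noteq> C"
      using b1 C(1) unfolding split_block1_def by auto
    then obtain x where "X = {x}" unfolding e by (metis A_partition_memE)
    then show "card X = 1" by simp
  qed
  then have "P = A_partition n (insert y C)" using A_partition_block1[OF P] B by simp
  with y(1) show thesis by (rule that)
qed

lemma proper_split_block1:
  assumes P: "partition_on {1..n} P" and C: "1 \<in> C" "C \<subset> block1 P"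
    and not_cover: "\<forall>y. y \<notin> C \<longrightarrow> P \<noteq> A_partition n (insert y C)"
  shows "proper_partition n (split_block1 P C)"
proof -
  have CP: "C \<in> split_block1 P C" "block1 P - C \<in> split_block1 P C"
    unfolding split_block1_def by simp_all
  have "split_block1 P C \<noteq> (\<lambda>i. {i}) ` {1..n}"
  proof
    assume e: "split_block1 P C = (\<lambda>i. {i}) ` {1..n}"
    then have "C = {1}" using CP(1) C(1) by auto
    then have "split_block1 P C = A_partition n C" using e A_partition_singleton by simp
    then show False using split_block1_eq_A_partition[OF P C] not_cover by metis
  qed
  moreover have "split_block1 P C \<noteq> {{1..n}}" using CP C(1) by auto
  ultimately show ?thesis unfolding proper_partition_def using partition_on_split_block1[OF P C] by simp
qed

end

lemma act_part_comp: "act_part (g \<circ> h) P = act_part g (act_part h P)"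
  unfolding act_part_def by (auto simp: image_comp)

lemma act_simp_comp: "act_simp (g \<circ> h) s = act_simp g (act_simp h s)"
  unfolding act_simp_def by (auto simp: image_comp act_part_comp)

lemma act_part_id: "act_part id P = P"
  unfolding act_part_def by simp

lemma act_simp_id: "act_simp id s = s"
  unfolding act_simp_def by (simp add: act_part_id)

lemma act_simp_insert: "act_simp g (insert P s) = insert (act_part g P) (act_simp g s)"
  unfolding act_simp_def by simp

lemma inj_act_part: "inj g \<Longrightarrow> inj (act_part g)"
  unfolding act_part_def by (simp add: inj_image_eq_iff inj_on_def)

lemma card_act_part: "inj g \<Longrightarrow> card (act_part g P) = card P"
  unfolding act_part_def by (simp add: card_image inj_image_eq_iff inj_on_def)

lemma card_act_simp: "inj g \<Longrightarrow> card (act_simp g s) = card s"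
  unfolding act_simp_def by (rule card_image, rule inj_on_subset[OF inj_act_part], auto)

lemma refines_act_part_iff:
  "inj g \<Longrightarrow> refines (act_part g P) (act_part g Q) \<longleftrightarrow> refines P Q"
  unfolding refines_def act_part_def by (auto simp: inj_image_subset_iff)

context partition_lattice
begin

context
  fixes g :: "nat \<Rightarrow> nat"
  assumes perm: "g permutes {1..n}"
begin

lemma permutes_image_ground: "g ` {1..n} = {1..n}"
  using perm by (simp add: permutes_image)

lemma act_A_partition: "act_part g (A_partition n D) = A_partition n (g ` D)"
proof -
  have "act_part g (A_partition n D) = insert (g ` D) ((\<lambda>y. {y}) ` (g ` ({1..n} - D)))"
    unfolding act_part_def A_partition_def by (simp add: image_image)
  also have "g ` ({1..n} - D) = {1..n} - g ` D"
    using permutes_image_ground permutes_inj[OF perm] by (simp add: image_set_diff)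
  finally show ?thesis unfolding A_partition_def .
qed

lemma act_two_block: "act_part g (two_block n C) = two_block n (g ` C)"
  unfolding act_part_def two_block_def
  using permutes_image_ground permutes_inj[OF perm] by (auto simp: image_set_diff)

lemma partition_on_act_part:
  assumes P: "partition_on {1..n} P"
  shows "partition_on {1..n} (act_part g P)"
proof -
  have "partition_on (g ` {1..n}) ((`) g ` P - {{}})"
    by (rule partition_on_inj_image[OF P inj_on_subset[OF permutes_inj[OF perm]]]) simp
  moreover have "{} \<notin> act_part g P" using partition_onD3[OF P] unfolding act_part_def by auto
  ultimately show ?thesis using permutes_image_ground unfolding act_part_def by simp
qed

end

context
  fixes g :: "nat \<Rightarrow> nat"
  assumes perm: "g permutes {1..n}"
begin

lemma act_part_inv_cancel: "act_part (inv g) (act_part g P) = P"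
  using act_part_comp[of "inv g" g P] permutes_inv_o(2)[OF perm] act_part_id by simp

lemma partition_on_act_part_iff:
  "partition_on {1..n} (act_part g P) \<longleftrightarrow> partition_on {1..n} P"
  using partition_on_act_part[OF perm, of P]
    partition_on_act_part[OF permutes_inv[OF perm], of "act_part g P"] act_part_inv_cancel by auto

lemma proper_act_part_iff: "proper_partition n (act_part g P) \<longleftrightarrow> proper_partition n P"
proof -
  have inj: "inj (act_part g)" using inj_act_part[OF permutes_inj[OF perm]] .
  have "act_part g ((\<lambda>i. {i}) ` {1..n}) = (\<lambda>i. {i}) ` (g ` {1..n})"
    unfolding act_part_def by (simp add: image_image)
  then have "act_part g ((\<lambda>i. {i}) ` {1..n}) = (\<lambda>i. {i}) ` {1..n}"
    using permutes_image_ground[OF perm] by simp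
  moreover have "act_part g {{1..n}} = {{1..n}}"
    using permutes_image_ground[OF perm] unfolding act_part_def by simp
  ultimately show ?thesis
    unfolding proper_partition_def using partition_on_act_part_iff inj by (metis injD)
qed

lemma simplex_act_simp_iff: "simplex n (act_simp g s) \<longleftrightarrow> simplex n s"
proof -
  have inj: "inj (act_part g)" using inj_act_part[OF permutes_inj[OF perm]] .
  then have "finite (act_simp g s) \<longleftrightarrow> finite s"
    unfolding act_simp_def by (simp add: finite_image_iff inj_on_subset)
  then show ?thesis
    unfolding simplex_def act_simp_def
    using proper_act_part_iff refines_act_part_iff[OF permutes_inj[OF perm]] by auto
qed

lemma A_partition_in_act_simp_iff:
  "A_partition n E \<in> act_simp g s \<longleftrightarrow> A_partition n (inv g ` E) \<in> s"
proof -
  have "A_partition n E = act_part g (A_partition n (inv g ` E))"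
    using act_A_partition[OF perm] permutes_inverses(1)[OF perm] by (simp add: image_image)
  then show ?thesis
    using inj_act_part[OF permutes_inj[OF perm]] unfolding act_simp_def by (auto dest: injD)
qed

end

context
  fixes g :: "nat \<Rightarrow> nat"
  assumes perm: "g permutes {1..n}" and fix1: "g 1 = 1"
begin

lemma block1_act_part:
  assumes P: "partition_on {1..n} P"
  shows "block1 (act_part g P) = g ` block1 P"
  by (rule block1_eq[OF partition_on_act_part[OF perm P]])
    (use block1_in_ground[OF P] fix1 in \<open>auto simp: act_part_def\<close>)

lemma act_split_block1:
  assumes P: "partition_on {1..n} P"
  shows "act_part g (split_block1 P C) = split_block1 (act_part g P) (g ` C)"
proof -
  have inj: "inj g" using permutes_inj[OF perm] .
  have "act_part g (P - {block1 P}) = act_part g P - {g ` block1 P}"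
    unfolding act_part_def using inj_image_eq_iff[OF inj] by auto
  moreover have "g ` (block1 P - C) = g ` block1 P - g ` C" using inj by (simp add: image_set_diff)
  ultimately show ?thesis
    unfolding split_block1_def block1_act_part[OF P] by (simp add: act_part_def)
qed

end

end

text \<open>The core is computed greedily: starting from \<open>{1}\<close>, add the element \<open>y\<close> for which
  \<open>A_partition n (insert y D)\<close> is a vertex of \<open>s\<close> (unique, since \<open>s\<close> is a chain), as long as there
  is one. After \<open>n\<close> steps the process is stationary.\<close>

definition core_step :: "nat \<Rightarrow> simplex \<Rightarrow> nat set \<Rightarrow> nat set" where
  "core_step n s D = (if \<exists>y. y \<notin> D \<and> A_partition n (insert y D) \<in> s
     then insert (SOME y. y \<notin> D \<and> A_partition n (insert y D) \<in> s) D else D)"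

definition core_iter :: "nat \<Rightarrow> simplex \<Rightarrow> nat \<Rightarrow> nat set" where
  "core_iter n s k = (core_step n s ^^ k) {1}"

definition core :: "nat \<Rightarrow> simplex \<Rightarrow> nat set" where
  "core n s = core_iter n s n"

lemma core_iter_0 [simp]: "core_iter n s 0 = {1}"
  unfolding core_iter_def by simp

lemma core_iter_Suc [simp]: "core_iter n s (Suc k) = core_step n s (core_iter n s k)"
  unfolding core_iter_def by simp

lemma core_step_subset: "D \<subseteq> core_step n s D"
  unfolding core_step_def by auto

lemma one_in_core_iter: "1 \<in> core_iter n s k"
  by (induction k) (auto dest: subsetD[OF core_step_subset])

lemma core_step_fixed_iff:
  "core_step n s D = D \<longleftrightarrow> \<not> (\<exists>y. y \<notin> D \<and> A_partition n (insert y D) \<in> s)"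
proof
  assume fixed: "core_step n s D = D"
  show "\<not> (\<exists>y. y \<notin> D \<and> A_partition n (insert y D) \<in> s)"
  proof
    assume ex: "\<exists>y. y \<notin> D \<and> A_partition n (insert y D) \<in> s"
    have "(SOME y. y \<notin> D \<and> A_partition n (insert y D) \<in> s) \<notin> D" using someI_ex[OF ex] by blast
    then show False using fixed ex unfolding core_step_def by auto
  qed
next
  assume "\<not> (\<exists>y. y \<notin> D \<and> A_partition n (insert y D) \<in> s)"
  then show "core_step n s D = D" unfolding core_step_def by (simp only: if_False)
qed

lemma core_step_cases:
  obtains "core_step n s D = D"
  | y where "y \<notin> D" "core_step n s D = insert y D" "A_partition n (insert y D) \<in> s"
proof (cases "\<exists>y. y \<notin> D \<and> A_partition n (insert y D) \<in> s")
  case True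
  define y where "y = (SOME y. y \<notin> D \<and> A_partition n (insert y D) \<in> s)"
  have "y \<notin> D \<and> A_partition n (insert y D) \<in> s" unfolding y_def using someI_ex[OF True] .
  moreover have "core_step n s D = insert y D" unfolding core_step_def y_def using True by simp
  ultimately show thesis using that(2) by blast
qed (use that(1) core_step_fixed_iff in blast)

lemma core_cong:
  assumes "\<And>E. 1 \<in> E \<Longrightarrow> A_partition n E \<in> s \<longleftrightarrow> A_partition n E \<in> s'"
  shows "core n s = core n s'"
proof -
  have "core_step n s D = core_step n s' D" if "1 \<in> D" for D
  proof -
    have "(\<lambda>y. y \<notin> D \<and> A_partition n (insert y D) \<in> s) = (\<lambda>y. y \<notin> D \<and> A_partition n (insert y D) \<in> s')"
      using assms that by auto
    then show ?thesis unfolding core_step_def by (simp only:)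
  qed
  then have "core_iter n s k = core_iter n s' k" for k
    by (induction k) (simp_all add: one_in_core_iter)
  then show ?thesis unfolding core_def by simp
qed

context partition_lattice
begin

context
  fixes s :: simplex
  assumes s: "simplex n s"
begin

lemma simplex_finite: "finite s"
  using s unfolding simplex_def by simp

lemma simplex_proper: "P \<in> s \<Longrightarrow> proper_partition n P"
  using s unfolding simplex_def by simp

lemma simplex_partition: "P \<in> s \<Longrightarrow> partition_on {1..n} P"
  using simplex_proper unfolding proper_partition_def by simp

lemma simplex_chain: "P \<in> s \<Longrightarrow> Q \<in> s \<Longrightarrow> refines P Q \<or> refines Q P"
  using s unfolding simplex_def by simp

lemma A_partition_vertex_subset:
  assumes "A_partition n E \<in> s" shows "E \<subseteq> {1..n}"
  using partition_on_block_subset[OF simplex_partition[OF assms]] by (simp add: A_partition_def)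

lemma A_partition_extension_unique:
  assumes D: "1 \<in> D" and y: "y \<notin> D" "A_partition n (insert y D) \<in> s"
    and y': "y' \<notin> D" "A_partition n (insert y' D) \<in> s"
  shows "y = y'"
proof -
  have D1: "1 \<in> insert y D" "insert y D \<subseteq> {1..n}" using D A_partition_vertex_subset[OF y(2)] by auto
  have D2: "1 \<in> insert y' D" "insert y' D \<subseteq> {1..n}" using D A_partition_vertex_subset[OF y'(2)] by auto
  have "insert y D \<subseteq> insert y' D \<or> insert y' D \<subseteq> insert y D"
    using simplex_chain[OF y(2) y'(2)]
      A_partition_refines_iff[OF partition_on_A_partition[OF D2] D1]
      A_partition_refines_iff[OF partition_on_A_partition[OF D1] D2]
      block1_A_partition[OF D1] block1_A_partition[OF D2] by simp
  then show ?thesis using y y' by auto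
qed

lemma core_iter_in_simplex:
  "1 \<in> core_iter n s k \<and> core_iter n s k \<subseteq> {1..n}
     \<and> (core_iter n s k = {1} \<or> A_partition n (core_iter n s k) \<in> s)"
proof (induction k)
  case (Suc k)
  show ?case
  proof (cases rule: core_step_cases[of n s "core_iter n s k"])
    case (2 y)
    then show ?thesis using Suc A_partition_vertex_subset[OF 2(3)] by simp
  qed (use Suc in simp)
qed (use one_in_ground in simp)

lemma finite_core_iter: "finite (core_iter n s k)"
  using core_iter_in_simplex[of k] finite_subset by blast

lemma core_iter_stationary_or_card:
  "core_step n s (core_iter n s k) = core_iter n s k \<or> k + 1 \<le> card (core_iter n s k)"
proof (induction k)
  case (Suc k)
  show ?case
  proof (cases rule: core_step_cases[of n s "core_iter n s k"])
    case (2 y)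
    then show ?thesis using Suc finite_core_iter[of k] by auto
  qed simp
qed simp

lemma core_step_core: "core_step n s (core n s) = core n s"
proof -
  have "card (core_iter n s n) \<le> card {1..n}" using core_iter_in_simplex[of n] by (intro card_mono) auto
  then show ?thesis using core_iter_stationary_or_card[of n] unfolding core_def by simp
qed

lemma core_maximal: "y \<notin> core n s \<Longrightarrow> A_partition n (insert y (core n s)) \<notin> s"
  using core_step_core core_step_fixed_iff by blast

lemma one_in_core: "1 \<in> core n s"
  and core_subset_ground: "core n s \<subseteq> {1..n}"
  and A_partition_core_in_simplex: "core n s \<noteq> {1} \<Longrightarrow> A_partition n (core n s) \<in> s"
  using core_iter_in_simplex[of n] unfolding core_def by auto

lemma finite_core: "finite (core n s)"
  unfolding core_def using finite_core_iter .

lemma vertex_above_A_partition_step: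
  assumes D: "1 \<in> D" "D \<subseteq> {1..n}" and y: "y \<notin> D" "A_partition n (insert y D) \<in> s"
    and Q: "Q \<in> s" and above: "refines (A_partition n D) Q" "A_partition n D \<noteq> Q"
  shows "Q = A_partition n (insert y D)
    \<or> (refines (A_partition n (insert y D)) Q \<and> A_partition n (insert y D) \<noteq> Q)"
proof (cases "refines Q (A_partition n (insert y D))")
  case True
  have "y \<in> {1..n}" using A_partition_vertex_subset[OF y(2)] by simp
  then show ?thesis
    using A_partition_cover[OF simplex_partition[OF Q] D y(1) _ above(1) True] above(2) by metis
qed (use simplex_chain[OF Q y(2)] in blast)

lemma core_iter_vertex_cases:
  "\<forall>Q\<in>s. (\<exists>E. 1 \<in> E \<and> E \<subseteq> core_iter n s k \<and> Q = A_partition n E)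
          \<or> (refines (A_partition n (core_iter n s k)) Q \<and> A_partition n (core_iter n s k) \<noteq> Q)"
proof (induction k)
  case 0
  have "refines (A_partition n {1}) Q \<and> A_partition n {1} \<noteq> Q" if Q: "Q \<in> s" for Q
    using A_partition_refines_iff[OF simplex_partition[OF Q], of "{1}"]
      block1_in_ground[OF simplex_partition[OF Q]] one_in_ground simplex_proper[OF Q]
      A_partition_singleton unfolding proper_partition_def by auto
  then show ?case by simp
next
  case (Suc k)
  let ?D = "core_iter n s k"
  have D: "1 \<in> ?D" "?D \<subseteq> {1..n}" using core_iter_in_simplex[of k] by auto
  show ?case
  proof (cases rule: core_step_cases[of n s ?D])
    case (2 y)
    have "(\<exists>E. 1 \<in> E \<and> E \<subseteq> insert y ?D \<and> Q = A_partition n E)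
        \<or> (refines (A_partition n (insert y ?D)) Q \<and> A_partition n (insert y ?D) \<noteq> Q)" if Q: "Q \<in> s" for Q
    proof (cases "\<exists>E. 1 \<in> E \<and> E \<subseteq> ?D \<and> Q = A_partition n E")
      case False
      then have "refines (A_partition n ?D) Q" "A_partition n ?D \<noteq> Q" using Suc Q by blast+
      from vertex_above_A_partition_step[OF D 2(1,3) Q this] show ?thesis
      proof (elim disjE)
        assume "Q = A_partition n (insert y ?D)"
        then show ?thesis using D(1) by (intro disjI1 exI[of _ "insert y ?D"]) simp
      qed (rule disjI2)
    qed blast
    then show ?thesis using 2(2) by simp
  qed (use Suc in simp)
qed

lemma core_vertex_cases:
  assumes "Q \<in> s"
  obtains E where "1 \<in> E" "E \<subseteq> core n s" "Q = A_partition n E"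
  | "refines (A_partition n (core n s)) Q" "A_partition n (core n s) \<noteq> Q"
  using core_iter_vertex_cases[of n] assms unfolding core_def by blast

lemma core_iter_saturated:
  "\<forall>m. 2 \<le> m \<and> m \<le> card (core_iter n s k) \<longrightarrow>
     (\<exists>E. card E = m \<and> 1 \<in> E \<and> E \<subseteq> core_iter n s k \<and> A_partition n E \<in> s)"
proof (induction k)
  case (Suc k)
  let ?D = "core_iter n s k"
  show ?case
  proof (cases rule: core_step_cases[of n s ?D])
    case (2 y)
    have card: "card (insert y ?D) = card ?D + 1" using 2(1) finite_core_iter[of k] by simp
    have "\<exists>E. card E = m \<and> 1 \<in> E \<and> E \<subseteq> insert y ?D \<and> A_partition n E \<in> s"
      if m: "2 \<le> m" "m \<le> card (insert y ?D)" for m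
    proof (cases "m \<le> card ?D")
      case True
      then show ?thesis using Suc m by blast
    next
      case False
      then have "m = card (insert y ?D)" using m card by simp
      then show ?thesis using 2(3) one_in_core_iter[of n s k] by blast
    qed
    then show ?thesis using 2(2) by simp
  qed (use Suc in simp)
qed auto

lemma core_saturated:
  "2 \<le> m \<Longrightarrow> m \<le> card (core n s) \<Longrightarrow>
     \<exists>E. card E = m \<and> 1 \<in> E \<and> E \<subseteq> core n s \<and> A_partition n E \<in> s"
  using core_iter_saturated[of n] unfolding core_def by blast

end

lemma core_mono:
  assumes s: "simplex n s" and s': "simplex n s'" and sub: "s \<subseteq> s'"
  shows "core n s \<subseteq> core n s'"
proof -
  have "core_iter n s k = core_iter n s' k
        \<or> (core_step n s (core_iter n s k) = core_iter n s k \<and> core_iter n s k \<subseteq> core_iter n s' k)" for k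
  proof (induction k)
    case (Suc k)
    let ?D = "core_iter n s k" and ?D' = "core_iter n s' k"
    have grow: "?D' \<subseteq> core_iter n s' (Suc k)" using core_step_subset by simp
    from Suc show ?case
    proof
      assume eq: "?D = ?D'"
      show ?case
      proof (cases rule: core_step_cases[of n s ?D])
        case 1
        then show ?thesis using grow eq by simp
      next
        case (2 y)
        have y': "A_partition n (insert y ?D) \<in> s'" using 2(3) sub by blast
        show ?thesis
        proof (cases rule: core_step_cases[of n s' ?D])
          case 1
          then show ?thesis using core_step_fixed_iff 2(1) y' by blast
        next
          case (2 z)
          have "y = z"
            using A_partition_extension_unique[OF s' one_in_core_iter \<open>y \<notin> ?D\<close> y' 2(1,3)] .
          then show ?thesis using \<open>core_step n s ?D = insert y ?D\<close> 2(2) eq by simp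
        qed
      qed
    qed (use grow in auto)
  qed simp
  then show ?thesis unfolding core_def by blast
qed

context
  fixes g :: "nat \<Rightarrow> nat" and s :: simplex
  assumes perm: "g permutes {1..n}" and fix1: "g 1 = 1" and s: "simplex n s"
begin

lemma core_step_act_simp:
  assumes D: "1 \<in> D"
  shows "core_step n (act_simp g s) (g ` D) = g ` core_step n s D"
proof -
  have gs: "simplex n (act_simp g s)" using simplex_act_simp_iff[OF perm] s by simp
  have inv: "inv g (g x) = x" "g (inv g x) = x" for x
    using permutes_inverses[OF perm] by simp_all
  have step: "A_partition n (insert y (g ` D)) \<in> act_simp g s \<longleftrightarrow> A_partition n (insert (inv g y) D) \<in> s"
    for y
    using A_partition_in_act_simp_iff[OF perm, of "insert y (g ` D)" s] inv by (simp add: image_image)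
  have fresh: "y \<notin> g ` D \<longleftrightarrow> inv g y \<notin> D" for y
    using inv by (metis image_iff)
  show ?thesis
  proof (cases rule: core_step_cases[of n s D])
    case 1
    then have "core_step n (act_simp g s) (g ` D) = g ` D"
      using core_step_fixed_iff step fresh by metis
    then show ?thesis using 1 by simp
  next
    case (2 y)
    have new: "g y \<notin> g ` D" "A_partition n (insert (g y) (g ` D)) \<in> act_simp g s"
      using 2(1) permutes_inj[OF perm] step[of "g y"] inv(1) 2(3) by (simp_all add: inj_image_mem_iff)
    show ?thesis
    proof (cases rule: core_step_cases[of n "act_simp g s" "g ` D"])
      case 1
      then show ?thesis using core_step_fixed_iff new by metis
    next
      case (2 z)
      have "1 \<in> g ` D" using D fix1 by (metis imageI)
      then have "z = g y" using A_partition_extension_unique[OF gs _ 2(1,3) new] by blast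
      then show ?thesis using 2(2) \<open>core_step n s D = insert y D\<close> by simp
    qed
  qed
qed

lemma core_act_simp: "core n (act_simp g s) = g ` core n s"
proof -
  have "core_iter n (act_simp g s) k = g ` core_iter n s k" for k
    by (induction k) (simp_all add: fix1 core_step_act_simp one_in_core_iter)
  then show ?thesis unfolding core_def by simp
qed

end

end

definition beyond_core :: "nat \<Rightarrow> simplex \<Rightarrow> partition set" where
  "beyond_core n s = {Q \<in> s. \<not> block1 Q \<subseteq> core n s}"

definition least_beyond_core :: "nat \<Rightarrow> simplex \<Rightarrow> partition" where
  "least_beyond_core n s = (SOME Q. Q \<in> beyond_core n s \<and> (\<forall>Q'\<in>beyond_core n s. refines Q Q'))"

definition pivot :: "nat \<Rightarrow> simplex \<Rightarrow> partition" where
  "pivot n s = (if beyond_core n s \<noteq> {} then split_block1 (least_beyond_core n s) (core n s)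
                else two_block n (core n s))"

context partition_lattice
begin

context
  fixes s :: simplex
  assumes s: "simplex n s"
begin

lemma beyond_core_block1:
  assumes Q: "Q \<in> beyond_core n s"
  shows "core n s \<subset> block1 Q" "refines (A_partition n (core n s)) Q"
proof -
  have Qs: "Q \<in> s" and not_below: "\<not> block1 Q \<subseteq> core n s" using Q unfolding beyond_core_def by auto
  have P: "partition_on {1..n} Q" using simplex_partition[OF s Qs] .
  show above: "refines (A_partition n (core n s)) Q"
  proof (cases rule: core_vertex_cases[OF s Qs])
    case (1 E)
    then have "block1 Q = E" using block1_A_partition core_subset_ground[OF s] by auto
    then show ?thesis using not_below 1(2) by simp
  qed
  then show "core n s \<subset> block1 Q"
    using A_partition_refines_iff[OF P one_in_core[OF s] core_subset_ground[OF s]] not_below by auto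
qed

lemma least_beyond_core:
  assumes ne: "beyond_core n s \<noteq> {}"
  shows "least_beyond_core n s \<in> beyond_core n s"
    and "Q \<in> beyond_core n s \<Longrightarrow> refines (least_beyond_core n s) Q"
proof -
  have fin: "finite (beyond_core n s)" using simplex_finite[OF s] unfolding beyond_core_def by simp
  have "Max (card ` beyond_core n s) \<in> card ` beyond_core n s" using fin ne by (intro Max_in) auto
  then obtain Q where Q: "Q \<in> beyond_core n s" "card Q = Max (card ` beyond_core n s)"
    by (metis imageE)
  have Qs: "Q \<in> s" using Q(1) unfolding beyond_core_def by simp
  have "refines Q Q'" if Q': "Q' \<in> beyond_core n s" for Q'
  proof (rule ccontr)
    assume not_QQ': "\<not> refines Q Q'"
    have Q's: "Q' \<in> s" using Q' unfolding beyond_core_def by simp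
    then have "refines Q' Q" "Q' \<noteq> Q" using simplex_chain[OF s Qs] not_QQ' refines_refl by auto
    then have "card Q < card Q'"
      using refines_card_less[OF _ simplex_partition[OF s Q's] simplex_partition[OF s Qs]] by simp
    then show False using Q(2) Q' fin by (metis Max_ge finite_imageI image_eqI leD)
  qed
  then have "\<exists>Q. Q \<in> beyond_core n s \<and> (\<forall>Q'\<in>beyond_core n s. refines Q Q')" using Q(1) by blast
  from someI_ex[OF this]
  show "least_beyond_core n s \<in> beyond_core n s"
    and "Q \<in> beyond_core n s \<Longrightarrow> refines (least_beyond_core n s) Q" for Q
    unfolding least_beyond_core_def by auto
qed

lemma least_beyond_core_in_simplex:
  assumes ne: "beyond_core n s \<noteq> {}"
  shows "least_beyond_core n s \<in> s" "partition_on {1..n} (least_beyond_core n s)"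
  using least_beyond_core(1)[OF ne] simplex_partition[OF s] unfolding beyond_core_def by auto

lemma least_beyond_core_unique:
  assumes P: "P \<in> beyond_core n s" "\<forall>Q\<in>beyond_core n s. refines P Q"
  shows "least_beyond_core n s = P"
proof -
  have ne: "beyond_core n s \<noteq> {}" using P by blast
  have "partition_on {1..n} P" using P(1) simplex_partition[OF s] unfolding beyond_core_def by blast
  then show ?thesis
    using refines_antisym[OF least_beyond_core_in_simplex(2)[OF ne]] least_beyond_core[OF ne] P by blast
qed

lemma core_ne_ground: "core n s \<noteq> {1..n}"
proof (cases "core n s = {1}")
  case True
  have "n \<in> {1..n}" "n \<notin> {1}" using n_ge_3 by auto
  then show ?thesis using True by blast
next
  case False
  then have "proper_partition n (A_partition n (core n s))"
    using simplex_proper[OF s] A_partition_core_in_simplex[OF s] by blast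
  then show ?thesis using proper_A_partition_iff[OF one_in_core[OF s] core_subset_ground[OF s]] by simp
qed

lemma block1_pivot: "block1 (pivot n s) = core n s"
proof (cases "beyond_core n s \<noteq> {}")
  case True
  then show ?thesis
    unfolding pivot_def
    using block1_split_block1[OF least_beyond_core_in_simplex(2)[OF True] one_in_core[OF s]]
      beyond_core_block1(1)[OF least_beyond_core(1)[OF True]] by simp
qed (simp add: pivot_def block1_two_block[OF one_in_core[OF s]])

lemma proper_pivot: "proper_partition n (pivot n s)"
proof (cases "beyond_core n s \<noteq> {}")
  case True
  have "\<forall>y. y \<notin> core n s \<longrightarrow> least_beyond_core n s \<noteq> A_partition n (insert y (core n s))"
    using core_maximal[OF s] least_beyond_core_in_simplex(1)[OF True] by metis
  then show ?thesis
    unfolding pivot_def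
    using True proper_split_block1[OF least_beyond_core_in_simplex(2)[OF True] one_in_core[OF s]
        beyond_core_block1(1)[OF least_beyond_core(1)[OF True]]] by simp
qed (simp add: pivot_def proper_two_block one_in_core[OF s] core_subset_ground[OF s] core_ne_ground)

lemma partition_on_pivot: "partition_on {1..n} (pivot n s)"
  using proper_pivot unfolding proper_partition_def by simp

lemma pivot_comparable:
  assumes Q: "Q \<in> s"
  shows "refines Q (pivot n s) \<or> refines (pivot n s) Q"
proof -
  let ?C = "core n s"
  have P: "partition_on {1..n} Q" using simplex_partition[OF s Q] .
  have C: "1 \<in> ?C" "?C \<subseteq> {1..n}" using one_in_core[OF s] core_subset_ground[OF s] .
  show ?thesis
  proof (cases rule: core_vertex_cases[OF s Q])
    case (1 E)
    then have "refines Q (pivot n s)"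
      using A_partition_refines_iff[OF partition_on_pivot 1(1)] block1_pivot C(2) by auto
    then show ?thesis by simp
  next
    case 2
    have CQ: "?C \<subseteq> block1 Q" using 2(1) A_partition_refines_iff[OF P C] by simp
    show ?thesis
    proof (cases "beyond_core n s \<noteq> {}")
      case ne: True
      let ?M = "least_beyond_core n s"
      have M: "partition_on {1..n} ?M" "?M \<in> s" using least_beyond_core_in_simplex[OF ne] by auto
      have pivot: "pivot n s = split_block1 ?M ?C" unfolding pivot_def using ne by simp
      show ?thesis
      proof (cases "Q \<in> beyond_core n s")
        case True
        have "refines (split_block1 ?M ?C) ?M"
          using split_block1_refines[OF M(1)] beyond_core_block1(1)[OF least_beyond_core(1)[OF ne]] by blast
        then show ?thesis using refines_trans least_beyond_core(2)[OF ne True] pivot by metis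
      next
        case False
        then have bQ: "block1 Q = ?C" using CQ Q unfolding beyond_core_def by auto
        have "\<not> refines ?M Q"
          using refines_block1[OF M(1) P one_in_ground] beyond_core_block1(1)[OF least_beyond_core(1)[OF ne]] bQ
          by auto
        then have "refines Q ?M" using simplex_chain[OF s Q M(2)] by blast
        then show ?thesis using refines_split_block1[OF M(1) P bQ] pivot by simp
      qed
    next
      case False
      then have "block1 Q = ?C" using CQ Q unfolding beyond_core_def by auto
      then show ?thesis using refines_two_block[OF P] False unfolding pivot_def by simp
    qed
  qed
qed

lemma simplex_insert_pivot: "simplex n (insert (pivot n s) s)"
  using s proper_pivot pivot_comparable refines_refl unfolding simplex_def by blast

end

lemma core_pivot_insert_remove:
  assumes s: "simplex n s" and P: "partition_on {1..n} P"
    and bP: "block1 P = core n s" and not_A: "P \<noteq> A_partition n (core n s)"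
  shows "core n (insert P s) = core n s" "core n (s - {P}) = core n s"
    "pivot n (insert P s) = pivot n s" "pivot n (s - {P}) = pivot n s"
proof -
  have "P \<noteq> A_partition n E" if "1 \<in> E" for E
  proof
    assume e: "P = A_partition n E"
    have "E \<subseteq> {1..n}" using partition_on_block_subset[OF P] e by (simp add: A_partition_def)
    then show False using block1_A_partition[OF that] e bP not_A by simp
  qed
  then show core: "core n (insert P s) = core n s" "core n (s - {P}) = core n s"
    by (metis core_cong insert_iff, metis core_cong Diff_iff singletonD)
  have "beyond_core n (insert P s) = beyond_core n s" "beyond_core n (s - {P}) = beyond_core n s"
    unfolding beyond_core_def core using bP by auto
  then show "pivot n (insert P s) = pivot n s" "pivot n (s - {P}) = pivot n s"
    unfolding pivot_def least_beyond_core_def core by simp_all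
qed

context
  fixes g :: "nat \<Rightarrow> nat" and s :: simplex
  assumes perm: "g permutes {1..n}" and fix1: "g 1 = 1" and s: "simplex n s"
begin

lemma beyond_core_act_simp: "beyond_core n (act_simp g s) = act_part g ` beyond_core n s"
proof -
  have below: "block1 (act_part g Q) \<subseteq> g ` core n s \<longleftrightarrow> block1 Q \<subseteq> core n s" if "Q \<in> s" for Q
    by (simp only: block1_act_part[OF perm fix1 simplex_partition[OF s that]]
        inj_image_subset_iff[OF permutes_inj[OF perm]])
  have "beyond_core n (act_simp g s) = {x \<in> act_simp g s. \<not> block1 x \<subseteq> g ` core n s}"
    unfolding beyond_core_def core_act_simp[OF perm fix1 s] ..
  also have "\<dots> = act_part g ` {Q \<in> s. \<not> block1 (act_part g Q) \<subseteq> g ` core n s}"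
    unfolding act_simp_def by blast
  also have "\<dots> = act_part g ` beyond_core n s"
    unfolding beyond_core_def using below by (metis (no_types, lifting))
  finally show ?thesis .
qed

lemma least_beyond_core_act_simp:
  assumes ne: "beyond_core n s \<noteq> {}"
  shows "least_beyond_core n (act_simp g s) = act_part g (least_beyond_core n s)"
  using least_beyond_core_unique[OF iffD2[OF simplex_act_simp_iff[OF perm] s]]
    beyond_core_act_simp least_beyond_core[OF s ne]
    refines_act_part_iff[OF permutes_inj[OF perm]] by auto

lemma pivot_act_simp: "pivot n (act_simp g s) = act_part g (pivot n s)"
proof (cases "beyond_core n s \<noteq> {}")
  case True
  then show ?thesis
    unfolding pivot_def
    using beyond_core_act_simp least_beyond_core_act_simp[OF True] core_act_simp[OF perm fix1 s]
      act_split_block1[OF perm fix1 least_beyond_core_in_simplex(2)[OF s True]] by simp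
next
  case False
  then show ?thesis
    unfolding pivot_def
    using beyond_core_act_simp core_act_simp[OF perm fix1 s] act_two_block[OF perm] by simp
qed

end

end

definition lower :: "nat \<Rightarrow> simplex \<Rightarrow> bool" where
  "lower n s \<longleftrightarrow> simplex n s \<and> pivot n s \<notin> s"

definition upper :: "nat \<Rightarrow> simplex \<Rightarrow> bool" where
  "upper n r \<longleftrightarrow> (\<exists>s. lower n s \<and> r = insert (pivot n s) s)"

context partition_lattice
begin

context
  fixes s :: simplex
  assumes s: "simplex n s"
begin

lemma core_ne_singleton_if_pivot_A_partition:
  assumes "pivot n s = A_partition n (core n s)"
  shows "core n s \<noteq> {1}"
  using assms proper_pivot[OF s] A_partition_singleton unfolding proper_partition_def by auto

lemma pivot_insert_pivot:
  assumes notin: "pivot n s \<notin> s"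
  shows "core n (insert (pivot n s) s) = core n s" "pivot n (insert (pivot n s) s) = pivot n s"
proof -
  have "pivot n s \<noteq> A_partition n (core n s)"
    using notin A_partition_core_in_simplex[OF s] core_ne_singleton_if_pivot_A_partition by metis
  then show "core n (insert (pivot n s) s) = core n s" "pivot n (insert (pivot n s) s) = pivot n s"
    using core_pivot_insert_remove[OF s partition_on_pivot[OF s] block1_pivot[OF s]] by simp_all
qed

lemma A_vertex_block1_card:
  assumes Q: "Q \<in> s" and A: "Q = A_partition n (block1 Q)"
  shows "2 \<le> card (block1 Q)" "card (block1 Q) \<le> n - 1"
proof -
  have P: "partition_on {1..n} Q" using simplex_partition[OF s Q] .
  note b1 = block1_in_ground(2)[OF P] block1_subset_ground[OF P]
  have ne: "block1 Q \<noteq> {1}" "block1 Q \<noteq> {1..n}"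
    using proper_A_partition_iff[OF b1] simplex_proper[OF s Q] A by simp_all
  have fin: "finite (block1 Q)" using b1(2) finite_subset by blast
  obtain x where "x \<in> block1 Q" "x \<noteq> 1" using ne(1) b1(1) by blast
  then have "{1, x} \<subseteq> block1 Q" using b1(1) by simp
  then have "card {1, x} \<le> card (block1 Q)" by (rule card_mono[OF fin])
  moreover have "card {1, x} = 2" using \<open>x \<noteq> 1\<close> by simp
  ultimately show "2 \<le> card (block1 Q)" by simp
  have "card (block1 Q) < card {1..n}" using b1(2) ne(2) by (intro psubset_card_mono) auto
  then show "card (block1 Q) \<le> n - 1" by simp
qed

lemma A_chain_block1_card_inj:
  assumes A: "\<forall>Q\<in>s. Q = A_partition n (block1 Q)"
  shows "inj_on (\<lambda>Q. card (block1 Q)) s"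
proof (rule inj_onI)
  fix Q Q' assume Q: "Q \<in> s" and Q': "Q' \<in> s" and e: "card (block1 Q) = card (block1 Q')"
  have P: "partition_on {1..n} Q" and P': "partition_on {1..n} Q'"
    using simplex_partition[OF s Q] simplex_partition[OF s Q'] .
  have "block1 Q \<subseteq> block1 Q' \<or> block1 Q' \<subseteq> block1 Q"
    using simplex_chain[OF s Q Q'] refines_block1[OF P P' one_in_ground]
      refines_block1[OF P' P one_in_ground] by blast
  moreover have "finite (block1 Q)" "finite (block1 Q')"
    using block1_subset_ground[OF P] block1_subset_ground[OF P'] finite_subset by blast+
  ultimately have "block1 Q = block1 Q'" using card_subset_eq e by metis
  then show "Q = Q'" using A Q Q' by metis
qed

text \<open>A vertex of \<open>s\<close> in A cannot have a block of 1 exactly one larger than the core: it would either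
  lie below the A-partition of the core, or extend the core, contradicting its maximality.\<close>

lemma A_vertex_block1_card_ne:
  assumes Q: "Q \<in> s" and A: "Q = A_partition n (block1 Q)"
  shows "card (block1 Q) \<noteq> card (core n s) + 1"
proof
  assume card: "card (block1 Q) = card (core n s) + 1"
  let ?C = "core n s"
  have P: "partition_on {1..n} Q" using simplex_partition[OF s Q] .
  have C: "1 \<in> ?C" "?C \<subseteq> {1..n}" using one_in_core[OF s] core_subset_ground[OF s] .
  show False
  proof (cases rule: core_vertex_cases[OF s Q])
    case (1 E)
    have "E \<subseteq> {1..n}" using 1(2) C(2) by blast
    then have "block1 Q = E" using block1_A_partition[OF 1(1)] 1(3) by simp
    then have "card (block1 Q) \<le> card ?C" using 1(2) card_mono[OF finite_core[OF s]] by simp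
    then show False using card by simp
  next
    case 2
    have sub: "?C \<subseteq> block1 Q" using 2(1) A_partition_refines_iff[OF P C] by simp
    have "card (block1 Q - ?C) = 1" using card card_Diff_subset[OF finite_core[OF s] sub] by simp
    then obtain y where y: "block1 Q - ?C = {y}" using card_1_singletonE by blast
    then have "block1 Q = insert y ?C" "y \<notin> ?C" using sub by auto
    then show False using core_maximal[OF s] A Q by metis
  qed
qed

lemma C_simp_A_vertices:
  assumes "s \<in> C_simp n"
  shows "\<forall>Q\<in>s. Q = A_partition n (block1 Q)"
  using assms A_partition_block1[OF simplex_partition[OF s]] unfolding C_simp_def setA_def by auto

lemma card_core_C_simp:
  assumes C: "s \<in> C_simp n"
  shows "card (core n s) = n - 1"
proof (rule ccontr)
  assume ne: "card (core n s) \<noteq> n - 1"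
  let ?f = "\<lambda>Q. card (block1 Q)" and ?c = "card (core n s) + 1"
  note A = C_simp_A_vertices[OF C]
  have "core n s \<subset> {1..n}" using core_subset_ground[OF s] core_ne_ground[OF s] by blast
  then have "card (core n s) < n" using psubset_card_mono[of "{1..n}"] by simp
  moreover have "1 \<le> card (core n s)"
    using one_in_core[OF s] finite_core[OF s] by (metis card_0_eq empty_iff less_one not_le)
  ultimately have c: "?c \<in> {2..n-1}" using ne by auto
  have "0 < card s" using s unfolding simplex_def by (simp add: card_gt_0_iff)
  moreover have "card s - 1 = n - 3" using C unfolding C_simp_def simplex_dim_def by simp
  ultimately have "n - 2 = card s" using n_ge_3 by linarith
  also have "\<dots> = card (?f ` s)" using card_image[OF A_chain_block1_card_inj[OF A]] by simp
  also have "card (?f ` s) \<le> card ({2..n-1} - {?c})"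
    using A_vertex_block1_card[OF _ A[rule_format]] A_vertex_block1_card_ne[OF _ A[rule_format]]
    by (intro card_mono) auto
  also have "\<dots> = n - 3" using c by simp
  finally show False using n_ge_3 by simp
qed

lemma pivot_C_simp:
  assumes C: "s \<in> C_simp n"
  shows "pivot n s = A_partition n (core n s)" "core n s \<noteq> {1}"
proof -
  let ?C = "core n s"
  have "card ({1..n} - ?C) = 1"
    using card_Diff_subset[OF finite_core[OF s] core_subset_ground[OF s]] card_core_C_simp[OF C] n_ge_3
    by simp
  then obtain z where z: "{1..n} - ?C = {z}" using card_1_singletonE by metis
  have "beyond_core n s = {}"
  proof (rule ccontr)
    assume "beyond_core n s \<noteq> {}"
    then obtain Q where Q: "Q \<in> beyond_core n s" by blast
    have Qs: "Q \<in> s" using Q unfolding beyond_core_def by simp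
    have P: "partition_on {1..n} Q" using simplex_partition[OF s Qs] .
    have CQ: "?C \<subseteq> block1 Q" "?C \<noteq> block1 Q" using beyond_core_block1(1)[OF s Q] by auto
    then obtain w where "w \<in> block1 Q" "w \<notin> ?C" by blast
    moreover from this have "w \<in> {1..n} - ?C" using block1_subset_ground[OF P] by blast
    ultimately have "z \<in> block1 Q" using z by simp
    moreover have "{1..n} = insert z ?C" using z core_subset_ground[OF s] by auto
    ultimately have "block1 Q = {1..n}" using CQ(1) block1_subset_ground[OF P] by auto
    then have "Q = {{1..n}}" using C_simp_A_vertices[OF C] Qs A_partition_ground by metis
    then show False using simplex_proper[OF s Qs] unfolding proper_partition_def by simp
  qed
  then show pivot: "pivot n s = A_partition n ?C"
    unfolding pivot_def using two_block_eq_A_partition_iff[OF one_in_core[OF s]] z by auto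
  show "?C \<noteq> {1}" using core_ne_singleton_if_pivot_A_partition[OF pivot] .
qed

end

lemma upper_simplex: "upper n r \<Longrightarrow> simplex n r"
  unfolding upper_def lower_def using simplex_insert_pivot by blast

lemma upper_pivot:
  assumes "lower n s"
  shows "pivot n (insert (pivot n s) s) = pivot n s" "core n (insert (pivot n s) s) = core n s"
    "beyond_core n (insert (pivot n s) s) = beyond_core n s"
proof -
  show core: "core n (insert (pivot n s) s) = core n s"
    and "pivot n (insert (pivot n s) s) = pivot n s"
    using assms pivot_insert_pivot unfolding lower_def by simp_all
  show "beyond_core n (insert (pivot n s) s) = beyond_core n s"
    using assms block1_pivot unfolding beyond_core_def core lower_def by auto
qed

lemma pivot_in_upper: "upper n r \<Longrightarrow> pivot n r \<in> r"
  unfolding upper_def using upper_pivot by auto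

lemma critical_not_lower_upper:
  assumes s: "simplex n s" and crit: "s \<in> C_simp n \<or> s = {alpha n}"
  shows "\<not> lower n s" "\<not> upper n s"
proof -
  have "pivot n s \<in> s \<and> \<not> upper n s"
  proof (cases "s = {alpha n}")
    case True
    have b1: "block1 (alpha n) = {1}" using block1_two_block two_block_singleton by force
    have "core n s = {1}"
      using A_partition_core_in_simplex[OF s] block1_A_partition[OF one_in_core[OF s] core_subset_ground[OF s]]
        True b1 by force
    then have "pivot n s = alpha n"
      unfolding pivot_def beyond_core_def using True b1 two_block_singleton by simp
    moreover have "\<not> upper n s"
    proof
      assume "upper n s"
      then obtain t where "lower n t" "s = insert (pivot n t) t" unfolding upper_def by blast
      then show False using True unfolding lower_def simplex_def by auto
    qed
    ultimately show ?thesis using True by simp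
  next
    case False
    then have C: "s \<in> C_simp n" using crit by simp
    note pivot = pivot_C_simp[OF s C]
    have "\<not> upper n s"
    proof
      assume "upper n s"
      then obtain t where t: "lower n t" "s = insert (pivot n t) t" unfolding upper_def by blast
      then have "pivot n t = A_partition n (core n t)" "core n t \<noteq> {1}"
        using upper_pivot[OF t(1)] pivot by simp_all
      then show False using t A_partition_core_in_simplex unfolding lower_def by metis
    qed
    then show ?thesis using pivot A_partition_core_in_simplex[OF s] by simp
  qed
  then show "\<not> lower n s" "\<not> upper n s" unfolding lower_def by auto
qed

lemma beyond_core_empty_if_pivot_A_partition:
  assumes s: "simplex n s" and pivot: "pivot n s = A_partition n (core n s)"
  shows "beyond_core n s = {}"
proof (rule ccontr)
  let ?C = "core n s"
  assume ne: "beyond_core n s \<noteq> {}"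
  have "split_block1 (least_beyond_core n s) ?C = A_partition n ?C" using pivot ne unfolding pivot_def by simp
  then obtain y where "y \<notin> ?C" "least_beyond_core n s = A_partition n (insert y ?C)"
    using split_block1_eq_A_partition[OF least_beyond_core_in_simplex(2)[OF s ne] one_in_core[OF s]
        beyond_core_block1(1)[OF s least_beyond_core(1)[OF s ne]]] by blast
  then show False using core_maximal[OF s] least_beyond_core_in_simplex(1)[OF s ne] by metis
qed

text \<open>If the pivot is the A-partition of the core, the core misses a single point and \<open>s\<close> is the
  saturated chain of A-partitions below it: its blocks of 1 have every size from 2 to \<open>n - 1\<close>.\<close>

lemma C_simp_if_pivot_A_partition:
  assumes s: "simplex n s" and pivot: "pivot n s = A_partition n (core n s)"
  shows "s \<in> C_simp n"
proof -
  let ?C = "core n s" and ?f = "\<lambda>Q. card (block1 Q)"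
  have C: "1 \<in> ?C" "?C \<subseteq> {1..n}" using one_in_core[OF s] core_subset_ground[OF s] .
  note empty = beyond_core_empty_if_pivot_A_partition[OF s pivot]
  then have "two_block n ?C = A_partition n ?C" using pivot empty unfolding pivot_def by simp
  then obtain z where z: "{1..n} - ?C = {z}" using two_block_eq_A_partition_iff[OF C(1)] by blast
  have card_C: "card ?C = n - 1"
    using card_Diff_subset[OF finite_core[OF s] C(2)] z n_ge_3 by simp
  have below: "\<exists>E. 1 \<in> E \<and> E \<subseteq> ?C \<and> Q = A_partition n E" if Q: "Q \<in> s" for Q
  proof (cases rule: core_vertex_cases[OF s Q])
    case 2
    have P: "partition_on {1..n} Q" using simplex_partition[OF s Q] .
    have "?C \<subseteq> block1 Q" using 2(1) A_partition_refines_iff[OF P C] by simp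
    moreover have "Q \<notin> beyond_core n s" using empty by simp
    ultimately have "block1 Q = ?C" using Q unfolding beyond_core_def by auto
    then show ?thesis using A_partition_block1_coatom[OF P] z 2(2) by simp
  qed blast
  then have A: "\<forall>Q\<in>s. Q = A_partition n (block1 Q)" using block1_A_partition C(2) by fastforce
  have "s \<subseteq> setA n"
    using below simplex_proper[OF s] A_partition_block_card unfolding setA_def by fastforce
  moreover have "?f ` s = {2..n-1}"
  proof
    show "?f ` s \<subseteq> {2..n-1}" using A_vertex_block1_card[OF s _ A[rule_format]] by auto
    show "{2..n-1} \<subseteq> ?f ` s"
    proof
      fix m assume m: "m \<in> {2..n-1}"
      then obtain E where E: "card E = m" "1 \<in> E" "E \<subseteq> ?C" "A_partition n E \<in> s"
        using core_saturated[OF s, of m] card_C by auto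
      then have "block1 (A_partition n E) = E" using block1_A_partition C(2) by auto
      then show "m \<in> ?f ` s" using E by (metis image_eqI)
    qed
  qed
  then have "card s = n - 2" using card_image[OF A_chain_block1_card_inj[OF s A]] by simp
  ultimately show ?thesis unfolding C_simp_def simplex_dim_def using s by simp
qed

lemma not_lower_upper_critical:
  assumes s: "simplex n s" and not_lower: "\<not> lower n s" and not_upper: "\<not> upper n s"
  shows "s \<in> C_simp n \<or> s = {alpha n}"
proof -
  have pivot_in: "pivot n s \<in> s" using not_lower s unfolding lower_def by simp
  show ?thesis
  proof (cases "pivot n s = A_partition n (core n s)")
    case True
    then show ?thesis using C_simp_if_pivot_A_partition[OF s] by simp
  next
    case not_A: False
    let ?t = "s - {pivot n s}"
    have pivot_t: "pivot n ?t = pivot n s"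
      using core_pivot_insert_remove(4)[OF s partition_on_pivot[OF s] block1_pivot[OF s] not_A] .
    have "?t = {}"
    proof (rule ccontr)
      assume "?t \<noteq> {}"
      then have "lower n ?t" using s pivot_t unfolding lower_def simplex_def by auto
      moreover have "s = insert (pivot n ?t) ?t" using pivot_t pivot_in by auto
      ultimately show False using not_upper unfolding upper_def by blast
    qed
    then have only: "Q \<in> s \<longleftrightarrow> Q = pivot n s" for Q using pivot_in by auto
    then have "beyond_core n s = {}" using block1_pivot[OF s] unfolding beyond_core_def by auto
    then have "pivot n s = two_block n (core n s)" unfolding pivot_def by simp
    moreover have "core n s = {1}" using A_partition_core_in_simplex[OF s] only not_A by blast
    ultimately have "pivot n s = alpha n" using two_block_singleton by simp
    then show ?thesis using only by auto
  qed
qed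

end

text \<open>Potentials are ordered lexicographically (theory \<open>Product_Lexorder\<close>).\<close>

definition beyond_rank :: "nat \<Rightarrow> simplex \<Rightarrow> nat" where
  "beyond_rank n r = (if beyond_core n r = {} then 0 else Suc (card (least_beyond_core n r)))"

definition potential :: "nat \<Rightarrow> simplex \<Rightarrow> nat \<times> nat \<times> nat" where
  "potential n r = (card r, card (core n r), beyond_rank n r)"

context partition_lattice
begin

lemma lower_eq_if_upper_eq:
  assumes s: "lower n s" and t: "lower n t" and e: "insert (pivot n s) s = insert (pivot n t) t"
  shows "s = t"
proof -
  have "pivot n s = pivot n t" using upper_pivot(1)[OF s] upper_pivot(1)[OF t] e by metis
  then show ?thesis using s t e unfolding lower_def by (metis Diff_insert_absorb)
qed

lemma beyond_rank_less:
  assumes s: "simplex n s" and b: "simplex n b" and sub: "s \<subseteq> b"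
    and core: "core n b = core n s" and pivots: "pivot n b \<noteq> pivot n s"
  shows "beyond_rank n s < beyond_rank n b"
proof (cases "beyond_core n s = {}")
  case True
  then have "beyond_core n b \<noteq> {}" using pivots core unfolding pivot_def by auto
  then show ?thesis using True unfolding beyond_rank_def by simp
next
  case False
  let ?M = "least_beyond_core n s" and ?M' = "least_beyond_core n b"
  have beyond_sb: "beyond_core n s \<subseteq> beyond_core n b"
    unfolding beyond_core_def core using sub by blast
  then have ne_b: "beyond_core n b \<noteq> {}" using False by blast
  have "refines ?M' ?M"
    using least_beyond_core(2)[OF b ne_b] least_beyond_core(1)[OF s False] beyond_sb by blast
  moreover have "?M' \<noteq> ?M" using pivots core False ne_b unfolding pivot_def by auto
  ultimately have "card ?M < card ?M'"
    using refines_card_less[OF _ least_beyond_core_in_simplex(2)[OF b ne_b]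
        least_beyond_core_in_simplex(2)[OF s False]] by simp
  then show ?thesis using False ne_b unfolding beyond_rank_def by simp
qed

lemma potential_less:
  assumes s: "lower n s" and t: "lower n t"
    and sub: "s \<subseteq> insert (pivot n t) t" and ne: "insert (pivot n s) s \<noteq> insert (pivot n t) t"
  shows "potential n (insert (pivot n s) s) < potential n (insert (pivot n t) t)"
proof -
  let ?r = "insert (pivot n s) s" and ?b = "insert (pivot n t) t"
  have ss: "simplex n s" and v: "pivot n s \<notin> s" using s unfolding lower_def by auto
  have sb: "simplex n ?b" using upper_simplex t unfolding upper_def by blast
  have "s \<noteq> ?b" using v upper_pivot(1)[OF t] by auto
  then have "card s < card ?b"
    using sub simplex_finite[OF sb] by (intro psubset_card_mono) auto
  moreover have card_r: "card ?r = Suc (card s)" using v simplex_finite[OF ss] by simp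
  ultimately consider "card ?r < card ?b" | "card ?r = card ?b" by linarith
  then show ?thesis
  proof cases
    case card: 2
    have "card (?b - s) = 1" using card card_r card_Diff_subset[OF simplex_finite[OF ss] sub] by simp
    then obtain w where "?b - s = {w}" by (rule card_1_singletonE)
    then have w: "?b = insert w s" "w \<notin> s" using sub by auto
    have r: "core n ?r = core n s" "beyond_rank n ?r = beyond_rank n s"
      using upper_pivot[OF s] unfolding beyond_rank_def least_beyond_core_def by simp_all
    have core_sb: "core n s \<subseteq> core n ?b" using core_mono[OF ss sb sub] .
    consider "card (core n s) < card (core n ?b)" | "core n ?b = core n s"
      using card_seteq[OF finite_core[OF sb] core_sb] by fastforce
    then show ?thesis
    proof cases
      case 2
      have "pivot n ?b \<noteq> pivot n s" using upper_pivot(1)[OF t] w ne v by auto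
      then have "beyond_rank n s < beyond_rank n ?b"
        using beyond_rank_less[OF ss sb _ 2] w by blast
      then show ?thesis using card r 2 unfolding potential_def by simp
    qed (use card r in \<open>simp add: potential_def\<close>)
  qed (simp add: potential_def)
qed

end

lemma no_increasing_cycle:
  fixes f :: "nat \<Rightarrow> 'a::order"
  assumes t: "0 < t" and increasing: "\<forall>i<t. f i < f (Suc i mod t)"
  shows False
proof -
  have "f 0 \<le> f i" if "i < t" for i
    using that
  proof (induction i)
    case (Suc i)
    then have "f i < f (Suc i)" using increasing by (metis Suc_lessD mod_less)
    then show ?case using Suc by simp
  qed simp
  moreover have "f (t - 1) < f 0" using increasing t by (metis Suc_pred' diff_less less_one mod_self)
  ultimately show False using t by (metis diff_less less_le_not_le less_one)
qed

definition orbit_matching :: "nat \<Rightarrow> (nat \<Rightarrow> nat) set \<Rightarrow> (simplex set \<times> simplex set) set" where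
  "orbit_matching n G = {(orbit G s, orbit G (insert (pivot n s) s)) | s. lower n s}"

text \<open>Well defined on orbits, since the potential is invariant under the group (lemma
  \<open>potential_orbit\<close> below).\<close>

definition orbit_potential :: "nat \<Rightarrow> simplex set \<Rightarrow> nat \<times> nat \<times> nat" where
  "orbit_potential n X = potential n (SOME r. r \<in> X)"

locale quotient_complex = partition_lattice +
  fixes G :: "(nat \<Rightarrow> nat) set"
  assumes subgroup: "subgroup_S1_Snm1 n G"
begin

lemma id_in_group: "id \<in> G"
  and group_permutes: "g \<in> G \<Longrightarrow> g permutes {1..n}"
  and group_fix1: "g \<in> G \<Longrightarrow> g 1 = 1"
  and group_comp: "g \<in> G \<Longrightarrow> h \<in> G \<Longrightarrow> g \<circ> h \<in> G"
  and group_inv: "g \<in> G \<Longrightarrow> inv g \<in> G"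
  using subgroup unfolding subgroup_S1_Snm1_def by simp_all

lemma orbit_self: "s \<in> orbit G s"
  unfolding orbit_def using id_in_group act_simp_id by (metis imageI)

lemma orbit_iff: "t \<in> orbit G s \<longleftrightarrow> (\<exists>g\<in>G. t = act_simp g s)"
  unfolding orbit_def by blast

lemma act_simp_in_orbit: "g \<in> G \<Longrightarrow> act_simp g s \<in> orbit G s"
  unfolding orbit_iff by blast

lemma orbit_eq:
  assumes "t \<in> orbit G s"
  shows "orbit G t = orbit G s"
proof -
  obtain g where g: "g \<in> G" "t = act_simp g s" using assms orbit_iff by blast
  have "act_simp (k \<circ> inv g) t = act_simp k s" for k
    using g act_simp_comp act_simp_id permutes_inv_o(2)[OF group_permutes[OF g(1)]]
    by (metis comp_assoc comp_id)
  then show ?thesis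
    using g act_simp_comp group_comp group_inv unfolding orbit_def by (auto simp: image_iff) metis+
qed

lemma orbit_eq_iff: "orbit G s = orbit G t \<longleftrightarrow> t \<in> orbit G s"
  using orbit_eq orbit_self by metis

lemma simplex_orbit: "t \<in> orbit G s \<Longrightarrow> simplex n t \<longleftrightarrow> simplex n s"
  using simplex_act_simp_iff group_permutes group_fix1 unfolding orbit_iff by auto

lemma card_orbit: "t \<in> orbit G s \<Longrightarrow> card t = card s"
  using card_act_simp[OF permutes_inj[OF group_permutes]] unfolding orbit_iff by auto

lemma lower_act_simp:
  assumes g: "g \<in> G" and s: "lower n s"
  shows "lower n (act_simp g s)"
    "act_simp g (insert (pivot n s) s) = insert (pivot n (act_simp g s)) (act_simp g s)"
proof -
  note perm = group_permutes[OF g] and fix1 = group_fix1[OF g]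
  have ss: "simplex n s" and v: "pivot n s \<notin> s" using s unfolding lower_def by auto
  have pivot: "pivot n (act_simp g s) = act_part g (pivot n s)"
    using pivot_act_simp[OF perm fix1 ss] .
  have "act_part g (pivot n s) \<notin> act_simp g s"
    using v inj_act_part[OF permutes_inj[OF perm]] unfolding act_simp_def by (auto dest: injD)
  then show "lower n (act_simp g s)"
    using pivot simplex_act_simp_iff[OF perm] ss unfolding lower_def by simp
  show "act_simp g (insert (pivot n s) s) = insert (pivot n (act_simp g s)) (act_simp g s)"
    using pivot act_simp_insert by simp
qed

lemma upper_act_simp: "g \<in> G \<Longrightarrow> upper n r \<Longrightarrow> upper n (act_simp g r)"
  unfolding upper_def using lower_act_simp by metis

lemma potential_orbit:
  assumes r: "simplex n r" and t: "t \<in> orbit G r"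
  shows "potential n t = potential n r"
proof -
  obtain g where g: "g \<in> G" and t: "t = act_simp g r" using t orbit_iff by blast
  note perm = group_permutes[OF g] and fix1 = group_fix1[OF g]
  have inj: "inj g" using permutes_inj[OF perm] .
  have "card (core n t) = card (core n r)"
    using core_act_simp[OF perm fix1 r] t inj by (simp add: card_image inj_on_subset)
  moreover have "beyond_rank n t = beyond_rank n r"
    using beyond_core_act_simp[OF perm fix1 r] least_beyond_core_act_simp[OF perm fix1 r]
      card_act_part[OF inj] t unfolding beyond_rank_def by simp
  ultimately show ?thesis
    unfolding potential_def using card_orbit[OF assms(2)] by simp
qed

lemma orbit_potential_eq: "simplex n r \<Longrightarrow> orbit_potential n (orbit G r) = potential n r"
  unfolding orbit_potential_def using potential_orbit someI[of "\<lambda>x. x \<in> orbit G r", OF orbit_self] by blast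

lemma quot_less_card:
  assumes t: "simplex n t" and less: "quot_less G (orbit G s) (orbit G t)"
  shows "card s < card t"
proof -
  obtain \<sigma> \<tau> g where st: "\<sigma> \<in> orbit G s" "\<tau> \<in> orbit G t" "g \<in> G" "\<sigma> \<subseteq> act_simp g \<tau>"
    using less unfolding quot_less_def quot_le_def by blast
  have "act_simp g \<tau> \<in> orbit G \<tau>" using act_simp_in_orbit[OF st(3)] .
  then have g\<tau>: "act_simp g \<tau> \<in> orbit G t" using orbit_eq[OF st(2)] by simp
  then have fin: "finite (act_simp g \<tau>)" using simplex_orbit t unfolding simplex_def by blast
  have "\<sigma> \<noteq> act_simp g \<tau>"
    using less orbit_eq[OF st(1)] orbit_eq[OF g\<tau>] unfolding quot_less_def by auto
  then have "card \<sigma> < card (act_simp g \<tau>)" using st(4) fin by (intro psubset_card_mono) auto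
  then show ?thesis using card_orbit[OF st(1)] card_orbit[OF g\<tau>] by simp
qed

lemma lower_not_upper: "lower n s \<Longrightarrow> \<not> upper n s"
  using pivot_in_upper unfolding lower_def by blast

lemma orbit_matching_covers:
  assumes s: "lower n s"
  shows "covers (quot_faces n G) (quot_less G) (orbit G (insert (pivot n s) s)) (orbit G s)"
proof -
  let ?r = "insert (pivot n s) s"
  have ss: "simplex n s" and sr: "simplex n ?r" using s upper_simplex unfolding upper_def lower_def by auto
  have card_r: "card ?r = card s + 1" using s simplex_finite[OF ss] unfolding lower_def by simp
  have "quot_le G (orbit G s) (orbit G ?r)"
    unfolding quot_le_def using orbit_self id_in_group act_simp_id by (metis subset_insertI)
  moreover have "orbit G s \<noteq> orbit G ?r" using card_orbit orbit_eq_iff card_r by (metis n_not_Suc_n Suc_eq_plus1)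
  moreover have "\<not> (quot_less G (orbit G s) (orbit G u) \<and> quot_less G (orbit G u) (orbit G ?r))"
    if "simplex n u" for u
    using quot_less_card[OF that, of s] quot_less_card[OF sr, of u] card_r by auto
  ultimately show ?thesis
    unfolding covers_def quot_less_def quot_faces_def using ss sr by blast
qed

lemma orbit_matching_disjoint:
  assumes p: "p \<in> orbit_matching n G" and q: "q \<in> orbit_matching n G" and pq: "p \<noteq> q"
  shows "{fst p, snd p} \<inter> {fst q, snd q} = {}"
proof -
  obtain s where s: "lower n s" "p = (orbit G s, orbit G (insert (pivot n s) s))"
    using p unfolding orbit_matching_def by blast
  obtain s' where s': "lower n s'" "q = (orbit G s', orbit G (insert (pivot n s') s'))"
    using q unfolding orbit_matching_def by blast
  have lower_upper: "orbit G a \<noteq> orbit G (insert (pivot n b) b)" if "lower n a" "lower n b" for a b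
  proof
    assume "orbit G a = orbit G (insert (pivot n b) b)"
    then obtain g where "g \<in> G" "a = act_simp g (insert (pivot n b) b)"
      using orbit_self orbit_iff by metis
    then have "upper n a" using upper_act_simp \<open>lower n b\<close> unfolding upper_def by blast
    then show False using lower_not_upper \<open>lower n a\<close> by blast
  qed
  have lowers: "orbit G s \<noteq> orbit G s'"
  proof
    assume "orbit G s = orbit G s'"
    then obtain g where g: "g \<in> G" "s' = act_simp g s" using orbit_eq_iff orbit_iff by metis
    then have "insert (pivot n s') s' \<in> orbit G (insert (pivot n s) s)"
      using lower_act_simp(2)[OF g(1) s(1)] act_simp_in_orbit by metis
    then show False using pq s s' \<open>orbit G s = orbit G s'\<close> orbit_eq_iff by metis
  qed
  have uppers: "orbit G (insert (pivot n s) s) \<noteq> orbit G (insert (pivot n s') s')"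
  proof
    assume "orbit G (insert (pivot n s) s) = orbit G (insert (pivot n s') s')"
    then obtain g where g: "g \<in> G" "insert (pivot n s') s' = act_simp g (insert (pivot n s) s)"
      using orbit_eq_iff orbit_iff by metis
    then have "s' = act_simp g s"
      using lower_eq_if_upper_eq[OF s'(1) lower_act_simp(1)[OF g(1) s(1)]] lower_act_simp(2)[OF g(1) s(1)]
      by simp
    then show False using lowers act_simp_in_orbit[OF g(1)] orbit_eq_iff by metis
  qed
  show ?thesis
    using lowers uppers lower_upper[OF s(1) s'(1)] lower_upper[OF s'(1) s(1)] s(2) s'(2) by auto
qed

lemma partial_matching_orbit_matching: "partial_matching (quot_faces n G) (quot_less G) (orbit_matching n G)"
  unfolding partial_matching_def
  using orbit_matching_covers orbit_matching_disjoint unfolding orbit_matching_def by blast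

lemma orbit_potential_less:
  assumes AB: "(A, B) \<in> orbit_matching n G" and AB': "(A', B') \<in> orbit_matching n G"
    and less: "quot_less G A B'" and ne: "B \<noteq> B'"
  shows "orbit_potential n B < orbit_potential n B'"
proof -
  obtain s where s: "lower n s" "A = orbit G s" "B = orbit G (insert (pivot n s) s)"
    using AB unfolding orbit_matching_def by blast
  obtain s' where s': "lower n s'" "B' = orbit G (insert (pivot n s') s')"
    using AB' unfolding orbit_matching_def by blast
  obtain \<sigma> \<tau> g where st: "\<sigma> \<in> A" "\<tau> \<in> B'" "g \<in> G" "\<sigma> \<subseteq> act_simp g \<tau>"
    using less unfolding quot_less_def quot_le_def by blast
  obtain k where k: "k \<in> G" "\<sigma> = act_simp k s" using st(1) s(2) orbit_iff by blast
  obtain k' where k': "k' \<in> G" "\<tau> = act_simp k' (insert (pivot n s') s')" using st(2) s'(2) orbit_iff by blast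
  have gk': "g \<circ> k' \<in> G" using group_comp[OF st(3) k'(1)] .
  let ?u = "act_simp (g \<circ> k') s'"
  have u: "lower n ?u" "act_simp g \<tau> = insert (pivot n ?u) ?u"
    using lower_act_simp[OF gk' s'(1)] k'(2) act_simp_comp by simp_all
  have \<sigma>: "lower n \<sigma>" "act_simp k (insert (pivot n s) s) = insert (pivot n \<sigma>) \<sigma>"
    using lower_act_simp[OF k(1) s(1)] k(2) by simp_all
  have B: "B = orbit G (insert (pivot n \<sigma>) \<sigma>)"
    using s(3) \<sigma>(2) act_simp_in_orbit[OF k(1)] orbit_eq by metis
  have B': "B' = orbit G (insert (pivot n ?u) ?u)"
    using s'(2) lower_act_simp(2)[OF gk' s'(1)] act_simp_in_orbit[OF gk'] orbit_eq by metis
  have "insert (pivot n \<sigma>) \<sigma> \<noteq> insert (pivot n ?u) ?u" using B B' ne by metis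
  then have "potential n (insert (pivot n \<sigma>) \<sigma>) < potential n (insert (pivot n ?u) ?u)"
    using potential_less[OF \<sigma>(1) u(1)] st(4) u(2) by simp
  moreover have "simplex n (insert (pivot n r) r)" if "lower n r" for r
    using upper_simplex that unfolding upper_def by blast
  ultimately show ?thesis using B B' orbit_potential_eq \<sigma>(1) u(1) by simp
qed

lemma acyclic_orbit_matching: "acyclic_matching (quot_faces n G) (quot_less G) (orbit_matching n G)"
  unfolding acyclic_matching_def
proof (intro conjI notI partial_matching_orbit_matching)
  assume "\<exists>t a b. 2 \<le> t \<and> inj_on b {..<t}
    \<and> (\<forall>i<t. (a i, b i) \<in> orbit_matching n G \<and> quot_less G (a i) (b (Suc i mod t)))"
  then obtain t a b where t: "2 \<le> t" and inj: "inj_on b {..<t}"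
    and cycle: "\<forall>i<t. (a i, b i) \<in> orbit_matching n G \<and> quot_less G (a i) (b (Suc i mod t))" by blast
  have "orbit_potential n (b i) < orbit_potential n (b (Suc i mod t))" if i: "i < t" for i
  proof -
    let ?j = "Suc i mod t"
    have j: "?j < t" using t by simp
    have "?j \<noteq> i"
    proof (cases "Suc i < t")
      case False
      then have "Suc i = t" using i by simp
      then show ?thesis using t by simp
    qed simp
    then have "b i \<noteq> b ?j" using inj i j by (metis inj_onD lessThan_iff)
    then show ?thesis using orbit_potential_less cycle i j by blast
  qed
  then show False using no_increasing_cycle[of t "\<lambda>i. orbit_potential n (b i)"] t by simp
qed

lemma lower_orbit_iff: "(\<exists>u. lower n u \<and> orbit G s = orbit G u) \<longleftrightarrow> lower n s"
proof
  assume "\<exists>u. lower n u \<and> orbit G s = orbit G u"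
  then obtain u g where "lower n u" "g \<in> G" "s = act_simp g u" using orbit_self orbit_iff by metis
  then show "lower n s" using lower_act_simp(1) by simp
qed blast

lemma upper_orbit_iff:
  "(\<exists>u. lower n u \<and> orbit G s = orbit G (insert (pivot n u) u)) \<longleftrightarrow> upper n s"
proof
  assume "\<exists>u. lower n u \<and> orbit G s = orbit G (insert (pivot n u) u)"
  then obtain u g where "lower n u" "g \<in> G" "s = act_simp g (insert (pivot n u) u)"
    using orbit_self orbit_iff by metis
  then show "upper n s" using upper_act_simp unfolding upper_def by blast
qed (auto simp: upper_def)

lemma critical_orbit_matching:
  "critical (quot_faces n G) (orbit_matching n G) = orbit G ` C_simp n \<union> {orbit G {alpha n}}"
proof -
  have critical_iff: "orbit G s \<in> critical (quot_faces n G) (orbit_matching n G)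
      \<longleftrightarrow> \<not> lower n s \<and> \<not> upper n s" if s: "simplex n s" for s
    using s lower_orbit_iff[of s] upper_orbit_iff[of s]
    unfolding critical_def quot_faces_def orbit_matching_def by blast
  show ?thesis
  proof (intro set_eqI iffI)
    fix X assume X: "X \<in> critical (quot_faces n G) (orbit_matching n G)"
    then obtain s where s: "simplex n s" "X = orbit G s" unfolding critical_def quot_faces_def by blast
    then show "X \<in> orbit G ` C_simp n \<union> {orbit G {alpha n}}"
      using not_lower_upper_critical[OF s(1)] critical_iff X by blast
  next
    fix X assume "X \<in> orbit G ` C_simp n \<union> {orbit G {alpha n}}"
    then obtain s where s: "simplex n s" "X = orbit G s" "s \<in> C_simp n \<or> s = {alpha n}"
      using simplex_alpha unfolding C_simp_def by blast
    then show "X \<in> critical (quot_faces n G) (orbit_matching n G)"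
      using critical_not_lower_upper[OF s(1,3)] critical_iff by blast
  qed
qed

end

theorem corollary13:
  fixes n :: nat and G :: "(nat \<Rightarrow> nat) set"
  assumes "n \<ge> 3" and "subgroup_S1_Snm1 n G"
  shows "\<exists>M. acyclic_matching (quot_faces n G) (quot_less G) M
           \<and> critical (quot_faces n G) M
               = orbit G ` C_simp n \<union> {orbit G {alpha n}}"
proof -
  interpret quotient_complex n G
    using assms by unfold_locales
  show ?thesis using acyclic_orbit_matching critical_orbit_matching by blast
qed

end
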